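(* Let $\rho>0$, $T>0$, $\theta\ge0$ and $x,y\in\mathbb{R}$. For $N\ge2$ let $(\bm\xi^{(N)},\bm\eta^{(N)})$ be the unique Nash equilibrium on the grid $\mathbb{T}_N$ with initial inventories $x,y$, as described in the context. (a) If $\theta>0$, then $$\lim_{N\uparrow\infty}\mathbb{E}\big[\mathscr{C}_{\mathbb{T}_N}(\bm\xi^{(N)}|\bm\eta^{(N)})\big]=\frac{(x+y)^2\big(36e^{6\rho T}(8\rho T+13)-60e^{3\rho T}-3\big)}{16\big(2e^{3\rho T}(3\rho T+5)-1\big)^2}+\frac{x^2-y^2}{2(\rho T+1)}+\frac{(x-y)^2}{16(\rho T+1)^2}.$$ (b) If $\theta=0$, then $$\lim_{N\uparrow\infty}\mathbb{E}\big[\mathscr{C}_{\mathbb{T}_{2N}}(\bm\xi^{(2N)}|\bm\eta^{(2N)})\big]=\frac{(x+y)^2(6e^{6\rho T}+3)}{2\big(2e^{6\rho T}(3\rho T+5)+e^{3\rho T}+3\rho T+7\big)}+\frac{x^2-y^2}{2(e^{-\rho T}+\rho T+1)}$$ and $$\lim_{N\uparrow\infty}\mathbb{E}\big[\mathscr{C}_{\mathbb{T}_{2N+1}}(\bm\xi^{(2N+1)}|\bm\eta^{(2N+1)})\big]=\frac{(x+y)^2(6e^{6\rho T}-3)}{2\big(2e^{6\rho T}(3\rho T+5)-3e^{3\rho T}-3\rho T-7\big)}+\frac{x^2-y^2}{2(-e^{-\rho T}+\rho T+1)}.$$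
   Context: Model: Let $(\Omega,(\mathscr F_t)_{t\ge0},\mathscr F,\mathbb P)$ be a filtered probability space with right-continuous filtration and $\mathbb P$-trivial $\mathscr F_0$, and let $S^0$ be a right-continuous martingale (unaffected price). Fix $\rho>0$, $T>0$, $\theta\ge0$, and for $N\ge2$ the grid $\mathbb T_N=\{t_k=kT/N: k=0,\dots,N\}$. An admissible strategy for inventory $z$ is a vector $\bm\zeta=(\zeta_0,\dots,\zeta_N)$ of bounded random variables with $\zeta_k$ $\mathscr F_{t_k}$-measurable and $\sum_k\zeta_k=z$ a.s.; denote the set by $\mathscr X(z,\mathbb T_N)$. For $\bm\xi\in\mathscr X(x,\mathbb T_N)$, $\bm\eta\in\mathscr X(y,\mathbb T_N)$ the price is $S^{\bm\xi,\bm\eta}_t=S^0_t-\sum_{t_k<t}e^{-\rho(t-t_k)}(\xi_k+\eta_k)$. With $(\varepsilon_k)$ i.i.d. Bernoulli$(1/2)$ independent of $\sigma(\bigcup_t\mathscr F_t)$, the costs are $\mathscr C_{\mathbb T_N}(\bm\xi|\bm\eta)=xS^0_0+\sum_{k=0}^N\big(\tfrac12\xi_k^2-S^{\bm\xi,\bm\eta}_{t_k}\xi_k+\varepsilon_k\xi_k\eta_k+\theta\xi_k^2\big)$ and $\mathscr C_{\mathbb T_N}(\bm\eta|\bm\xi)=yS^0_0+\sum_{k=0}^N\big(\tfrac12\eta_k^2-S^{\bm\xi,\bm\eta}_{t_k}\eta_k+(1-\varepsilon_k)\xi_k\eta_k+\theta\eta_k^2\big)$. A Nash equilibrium is a pair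 $(\bm\xi^*,\bm\eta^* )\in\mathscr X(x,\mathbb T_N)\times\mathscr X(y,\mathbb T_N)$ such that $\bm\xi^*$ minimizes $\mathbb E[\mathscr C_{\mathbb T_N}(\cdot|\bm\eta^* )]$ over $\mathscr X(x,\mathbb T_N)$ and $\bm\eta^*$ minimizes $\mathbb E[\mathscr C_{\mathbb T_N}(\cdot|\bm\xi^* )]$ over $\mathscr X(y,\mathbb T_N)$. It is known that there is a unique Nash equilibrium, given by the deterministic vectors $\bm\xi^{(N)}=\frac12(x+y)\bm v+\frac12(x-y)\bm w$ and $\bm\eta^{(N)}=\frac12(x+y)\bm v-\frac12(x-y)\bm w$, where: $\tilde\Gamma$ is the $(N+1)\times(N+1)$ lower triangular matrix with $\tilde\Gamma_{ij}=0$ ($i<j$), $1/2$ ($i=j$), $e^{-\rho(i-j)T/N}$ ($i>j$); $\Gamma=\tilde\Gamma+\tilde\Gamma^\top$; $\bm\nu=(\Gamma+\tilde\Gamma+2\theta\mathrm{Id})^{-1}\mathbf1$, $\bm\omega=(\Gamma-\tilde\Gamma+2\theta\mathrm{Id})^{-1}\mathbf1$; $\bm v=\bm\nu/(\mathbf1^\top\bm\nu)$, $\bm w=\bm\omega/(\mathbf1^\top\bm\omega)$. *)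

theory Defs
  imports Complex_Main
begin

text \<open>Vectors/matrices of size (N+1) are represented as functions on nat, indices 0..N.\<close>

definition gtil :: "real \<Rightarrow> real \<Rightarrow> nat \<Rightarrow> nat \<Rightarrow> nat \<Rightarrow> real" where
  "gtil \<rho> T N i j = (if i < j then 0 else if i = j then 1/2
      else exp (- \<rho> * real (i - j) * T / real N))"

definition Gam :: "real \<Rightarrow> real \<Rightarrow> nat \<Rightarrow> nat \<Rightarrow> nat \<Rightarrow> real" where
  "Gam \<rho> T N i j = gtil \<rho> T N i j + gtil \<rho> T N j i"

definition inv_apply_ones :: "nat \<Rightarrow> (nat \<Rightarrow> nat \<Rightarrow> real) \<Rightarrow> (nat \<Rightarrow> real)" where
  "inv_apply_ones N A = (THE v. (\<forall>i>N. v i = 0) \<and> (\<forall>i\<le>N. (\<Sum>j\<le>N. A i j * v j) = 1))"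

definition nu_vec :: "real \<Rightarrow> real \<Rightarrow> real \<Rightarrow> nat \<Rightarrow> nat \<Rightarrow> real" where
  "nu_vec \<rho> T \<theta> N = inv_apply_ones N
     (\<lambda>i j. Gam \<rho> T N i j + gtil \<rho> T N i j + (if i = j then 2 * \<theta> else 0))"

definition omega_vec :: "real \<Rightarrow> real \<Rightarrow> real \<Rightarrow> nat \<Rightarrow> nat \<Rightarrow> real" where
  "omega_vec \<rho> T \<theta> N = inv_apply_ones N
     (\<lambda>i j. Gam \<rho> T N i j - gtil \<rho> T N i j + (if i = j then 2 * \<theta> else 0))"

definition v_vec :: "real \<Rightarrow> real \<Rightarrow> real \<Rightarrow> nat \<Rightarrow> nat \<Rightarrow> real" where
  "v_vec \<rho> T \<theta> N k = nu_vec \<rho> T \<theta> N k / (\<Sum>j\<le>N. nu_vec \<rho> T \<theta> N j)"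

definition w_vec :: "real \<Rightarrow> real \<Rightarrow> real \<Rightarrow> nat \<Rightarrow> nat \<Rightarrow> real" where
  "w_vec \<rho> T \<theta> N k = omega_vec \<rho> T \<theta> N k / (\<Sum>j\<le>N. omega_vec \<rho> T \<theta> N j)"

text \<open>The (unique) Nash equilibrium on the grid T_N with inventories x, y.\<close>
definition xiN :: "real \<Rightarrow> real \<Rightarrow> real \<Rightarrow> real \<Rightarrow> real \<Rightarrow> nat \<Rightarrow> nat \<Rightarrow> real" where
  "xiN \<rho> T \<theta> x y N k = (x + y) / 2 * v_vec \<rho> T \<theta> N k + (x - y) / 2 * w_vec \<rho> T \<theta> N k"

definition etaN :: "real \<Rightarrow> real \<Rightarrow> real \<Rightarrow> real \<Rightarrow> real \<Rightarrow> nat \<Rightarrow> nat \<Rightarrow> real" where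
  "etaN \<rho> T \<theta> x y N k = (x + y) / 2 * v_vec \<rho> T \<theta> N k - (x - y) / 2 * w_vec \<rho> T \<theta> N k"

text \<open>Expected cost E[C_{T_N}(xi|eta)] for DETERMINISTIC strategies xi (inventory x), eta.
  Here s0 = S^0_0; since S^0 is a martingale and F_0 is trivial, E[S^0_t] = s0, and
  E[eps_k] = 1/2 by independence, so
  E[S^{xi,eta}_{t_k}] = s0 - sum_{j<k} exp(-rho (t_k - t_j)) (xi_j + eta_j).\<close>
definition exp_cost ::
  "real \<Rightarrow> real \<Rightarrow> real \<Rightarrow> nat \<Rightarrow> real \<Rightarrow> real \<Rightarrow> (nat \<Rightarrow> real) \<Rightarrow> (nat \<Rightarrow> real) \<Rightarrow> real" where
  "exp_cost \<rho> T \<theta> N s0 x \<xi> \<eta> =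
     x * s0 + (\<Sum>k\<le>N.
        1/2 * (\<xi> k)^2
      - (s0 - (\<Sum>j<k. exp (- \<rho> * (real k * T / real N - real j * T / real N)) * (\<xi> j + \<eta> j))) * \<xi> k
      + 1/2 * \<xi> k * \<eta> k
      + \<theta> * (\<xi> k)^2)"

definition eq_cost :: "real \<Rightarrow> real \<Rightarrow> real \<Rightarrow> real \<Rightarrow> real \<Rightarrow> real \<Rightarrow> nat \<Rightarrow> real" where
  "eq_cost \<rho> T \<theta> s0 x y N =
     exp_cost \<rho> T \<theta> N s0 x (xiN \<rho> T \<theta> x y N) (etaN \<rho> T \<theta> x y N)"

end

theory Submission
  imports Defs "HOL-Real_Asymp.Real_Asymp"
begin

text \<open>With \<open>a = exp (- \<rho> T / N)\<close> and \<open>c = 1/2 + 2\<theta>\<close>, the vectors \<open>\<nu>\<close> and \<open>\<omega>\<close> solve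
  linear systems whose matrices combine the kernel \<open>a ^ \<bar>i - j\<bar>\<close> with a diagonal.  Its
  quadratic form is a sum of squares of discounted partial sums, so both systems are uniquely
  solvable, and they can be solved in closed form: \<open>\<omega>\<close> is affine in a geometric sequence of
  ratio \<open>a (c - 1) / c\<close>, and \<open>\<nu>\<close> is a constant plus two geometric sequences whose ratios are
  the roots of a quadratic.  Pairing the systems with \<open>\<nu>\<close> and \<open>\<omega>\<close> reduces the expected
  cost to the sums of \<open>\<nu>\<close>, \<open>\<omega>\<close>, \<open>\<nu>\<^sup>2\<close>, \<open>\<omega>\<^sup>2\<close> and \<open>\<nu> \<omega>\<close>.  As \<open>N \<rightarrow> \<infinity>\<close> the large
  root behaves like \<open>1 + 3 \<rho> T / N\<close>, producing the factors \<open>exp (3 \<rho> T)\<close>, while the small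
  root and the ratio of \<open>\<omega>\<close> tend to \<open>(c - 1) / c\<close>.  For \<open>\<theta> > 0\<close> their \<open>N\<close>-th powers
  vanish; for \<open>\<theta> = 0\<close> the limit is \<open>-1\<close>, the powers alternate in sign, and the cost
  converges separately along even and odd \<open>N\<close>.\<close>

section \<open>The kernel matrix and its quadratic form\<close>

definition grid_decay :: "real \<Rightarrow> nat \<Rightarrow> real" where
  "grid_decay r N = exp (- r / real N)"

definition decay_kernel :: "real \<Rightarrow> nat \<Rightarrow> nat \<Rightarrow> real" where
  "decay_kernel a i j = (if i < j then 0 else if i = j then 1/2 else a ^ (i - j))"

definition kernel_matrix :: "real \<Rightarrow> real \<Rightarrow> real \<Rightarrow> real \<Rightarrow> nat \<Rightarrow> nat \<Rightarrow> real" where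
  "kernel_matrix a \<alpha> \<beta> t i j =
     \<alpha> * decay_kernel a i j + \<beta> * decay_kernel a j i + (if i = j then t else 0)"

definition past_sum :: "real \<Rightarrow> (nat \<Rightarrow> real) \<Rightarrow> nat \<Rightarrow> real" where
  "past_sum a w i = (\<Sum>j<i. a ^ (i - j) * w j)"

definition future_sum :: "real \<Rightarrow> nat \<Rightarrow> (nat \<Rightarrow> real) \<Rightarrow> nat \<Rightarrow> real" where
  "future_sum a N w i = (\<Sum>j\<in>{i<..N}. a ^ (j - i) * w j)"

lemma gtil_eq_decay_kernel:
  assumes "N > 0"
  shows "gtil \<rho> T N i j = decay_kernel (grid_decay (\<rho> * T) N) i j"
proof -
  have "exp (- \<rho> * real n * T / real N) = grid_decay (\<rho> * T) N ^ n" for n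
    unfolding grid_decay_def by (subst exp_of_nat_mult[symmetric]) (simp add: field_simps)
  then show ?thesis
    unfolding gtil_def decay_kernel_def by (simp del: of_nat_diff)
qed

lemma past_sum_0 [simp]: "past_sum a w 0 = 0"
  by (simp add: past_sum_def)

lemma past_sum_Suc: "past_sum a w (Suc i) = a * (past_sum a w i + w i)"
proof -
  have "(\<Sum>j<i. a ^ (Suc i - j) * w j) = a * past_sum a w i"
    unfolding past_sum_def sum_distrib_left by (rule sum.cong) (auto simp: Suc_diff_le)
  then show ?thesis
    by (simp add: past_sum_def algebra_simps)
qed

lemma future_sum_self [simp]: "future_sum a N w N = 0"
  by (simp add: future_sum_def)

lemma future_sum_step:
  assumes "i < N"
  shows "future_sum a N w i = a * (w (Suc i) + future_sum a N w (Suc i))"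
proof -
  have "{i<..N} = insert (Suc i) {Suc i<..N}"
    using assms by auto
  moreover have "(\<Sum>j\<in>{Suc i<..N}. a ^ (j - i) * w j) = a * future_sum a N w (Suc i)"
    unfolding future_sum_def sum_distrib_left
    by (rule sum.cong) (auto simp: Suc_diff_Suc simp flip: power_Suc)
  ultimately show ?thesis
    by (simp add: future_sum_def algebra_simps)
qed

lemma kernel_matrix_row:
  assumes "i \<le> N"
  shows "(\<Sum>j\<le>N. kernel_matrix a \<alpha> \<beta> t i j * w j) =
           \<alpha> * past_sum a w i + (\<alpha>/2 + \<beta>/2 + t) * w i + \<beta> * future_sum a N w i"
proof -
  let ?f = "\<lambda>j. kernel_matrix a \<alpha> \<beta> t i j * w j"
  have "{..N} = insert i ({..<i} \<union> {i<..N})"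
    using assms by auto
  then have "sum ?f {..N} = ?f i + sum ?f ({..<i} \<union> {i<..N})"
    by simp
  also have "sum ?f ({..<i} \<union> {i<..N}) = sum ?f {..<i} + sum ?f {i<..N}"
    by (rule sum.union_disjoint) auto
  finally have "sum ?f {..N} = ?f i + sum ?f {..<i} + sum ?f {i<..N}"
    by simp
  moreover have "sum ?f {..<i} = \<alpha> * past_sum a w i"
    unfolding past_sum_def sum_distrib_left
    by (rule sum.cong) (auto simp: kernel_matrix_def decay_kernel_def)
  moreover have "sum ?f {i<..N} = \<beta> * future_sum a N w i"
    unfolding future_sum_def sum_distrib_left
    by (rule sum.cong) (auto simp: kernel_matrix_def decay_kernel_def)
  ultimately show ?thesis
    by (simp add: kernel_matrix_def decay_kernel_def algebra_simps)
qed

lemma decay_kernel_row: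
  assumes "i \<le> N"
  shows "(\<Sum>j\<le>N. decay_kernel a i j * w j) = past_sum a w i + w i / 2"
  using kernel_matrix_row[OF assms, of a 1 0 0 w] by (simp add: kernel_matrix_def)

text \<open>With \<open>P k\<close> the discounted partial sums \<open>\<Sum>j\<le>k. a^(k-j) * u j\<close>, the recursion
  \<open>u (k+1) = P (k+1) - a * P k\<close> makes the quadratic form telescope.\<close>

lemma decay_kernel_form:
  "(\<Sum>i\<le>N. u i * (\<Sum>j\<le>N. decay_kernel a i j * u j)) =
     ((past_sum a u N + u N)^2 + (1 - a^2) * (\<Sum>k<N. (past_sum a u k + u k)^2)) / 2"
proof -
  define P where "P k = past_sum a u k + u k" for k
  have "(\<Sum>i\<le>N. u i * (past_sum a u i + u i / 2)) = (P N ^ 2 + (1 - a^2) * (\<Sum>k<N. P k ^ 2)) / 2"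
  proof (induction N)
    case 0
    then show ?case by (simp add: P_def power2_eq_square)
  next
    case (Suc N)
    have past: "past_sum a u (Suc N) = a * P N" and step: "u (Suc N) = P (Suc N) - a * P N"
      by (simp_all add: P_def past_sum_Suc)
    have "u (Suc N) * (past_sum a u (Suc N) + u (Suc N) / 2) = (P (Suc N) ^ 2 - a^2 * P N ^ 2) / 2"
      unfolding past step by (simp add: field_simps power2_eq_square)
    with Suc.IH show ?case
      by (simp add: field_simps)
  qed
  then show ?thesis
    by (simp add: decay_kernel_row P_def)
qed

lemma decay_kernel_form_pos:
  assumes "\<bar>a\<bar> < 1" and "i \<le> N" and "u i \<noteq> 0"
  shows "0 < (\<Sum>i\<le>N. u i * (\<Sum>j\<le>N. decay_kernel a i j * u j))"
proof (rule ccontr)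
  define P where "P k = past_sum a u k + u k" for k
  define S where "S = (\<Sum>k<N. P k ^ 2)"
  assume "\<not> ?thesis"
  then have le: "P N ^ 2 + (1 - a^2) * S \<le> 0"
    unfolding decay_kernel_form P_def[symmetric] S_def[symmetric] by simp
  have "0 < 1 - a^2"
    using assms(1) by (simp add: abs_square_less_1)
  moreover have "0 \<le> S"
    by (simp add: S_def sum_nonneg)
  ultimately have "0 \<le> (1 - a^2) * S"
    by simp
  moreover have "0 \<le> P N ^ 2"
    by simp
  ultimately have "P N ^ 2 = 0" and "(1 - a^2) * S = 0"
    using le by linarith+
  then have "P N = 0" and "S = 0"
    using \<open>0 < 1 - a^2\<close> by simp_all
  then have P0: "P k = 0" if "k \<le> N" for k
    using that by (cases "k = N") (auto simp: S_def sum_nonneg_eq_0_iff)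
  have "u k = 0" if "k \<le> N" for k
  proof (cases k)
    case 0
    then show ?thesis using P0[of 0] by (simp add: P_def)
  next
    case (Suc m)
    then show ?thesis
      using P0[of k] P0[of m] that by (simp add: P_def past_sum_Suc)
  qed
  with assms(2,3) show False by simp
qed

lemma kernel_matrix_form:
  "(\<Sum>i\<le>N. u i * (\<Sum>j\<le>N. kernel_matrix a \<alpha> \<beta> t i j * u j)) =
     (\<alpha> + \<beta>) * (\<Sum>i\<le>N. u i * (\<Sum>j\<le>N. decay_kernel a i j * u j)) + t * (\<Sum>i\<le>N. (u i)^2)"
proof -
  have transposed: "(\<Sum>i\<le>N. u i * (\<Sum>j\<le>N. decay_kernel a j i * u j)) =
                      (\<Sum>i\<le>N. u i * (\<Sum>j\<le>N. decay_kernel a i j * u j))"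
    unfolding sum_distrib_left by (subst sum.swap) (simp add: mult_ac)
  have diagonal: "(\<Sum>j\<le>N. (if i = j then t else 0) * u j) = t * u i" if "i \<le> N" for i
  proof -
    have "(\<Sum>j\<le>N. (if i = j then t else 0) * u j) = (\<Sum>j\<le>N. if i = j then t * u j else 0)"
      by (rule sum.cong) auto
    with that show ?thesis by simp
  qed
  have "(\<Sum>i\<le>N. u i * (\<Sum>j\<le>N. kernel_matrix a \<alpha> \<beta> t i j * u j)) =
          \<alpha> * (\<Sum>i\<le>N. u i * (\<Sum>j\<le>N. decay_kernel a i j * u j))
        + \<beta> * (\<Sum>i\<le>N. u i * (\<Sum>j\<le>N. decay_kernel a j i * u j))
        + (\<Sum>i\<le>N. u i * (\<Sum>j\<le>N. (if i = j then t else 0) * u j))"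
    unfolding kernel_matrix_def by (simp add: algebra_simps sum.distrib sum_distrib_left)
  also have "(\<Sum>i\<le>N. u i * (\<Sum>j\<le>N. (if i = j then t else 0) * u j)) = (\<Sum>i\<le>N. u i * (t * u i))"
    by (rule sum.cong) (simp_all add: diagonal)
  also have "\<dots> = t * (\<Sum>i\<le>N. (u i)^2)"
    by (simp add: sum_distrib_left power2_eq_square mult_ac)
  finally show ?thesis
    unfolding transposed by (simp add: algebra_simps)
qed

lemma kernel_matrix_form_pos:
  assumes "\<bar>a\<bar> < 1" "0 < \<alpha> + \<beta>" "0 \<le> t" and "i \<le> N" "u i \<noteq> 0"
  shows "0 < (\<Sum>i\<le>N. u i * (\<Sum>j\<le>N. kernel_matrix a \<alpha> \<beta> t i j * u j))"
proof -
  have "0 < (\<alpha> + \<beta>) * (\<Sum>i\<le>N. u i * (\<Sum>j\<le>N. decay_kernel a i j * u j))"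
    using assms decay_kernel_form_pos by simp
  moreover have "0 \<le> t * (\<Sum>i\<le>N. (u i)^2)"
    using assms(3) by (simp add: sum_nonneg)
  ultimately show ?thesis
    unfolding kernel_matrix_form by linarith
qed

lemma inv_apply_ones_kernel_matrix:
  assumes "\<bar>a\<bar> < 1" "0 < \<alpha> + \<beta>" "0 \<le> t"
    and support: "\<And>i. i > N \<Longrightarrow> v i = 0"
    and solves: "\<And>i. i \<le> N \<Longrightarrow> (\<Sum>j\<le>N. kernel_matrix a \<alpha> \<beta> t i j * v j) = 1"
  shows "inv_apply_ones N (kernel_matrix a \<alpha> \<beta> t) = v"
  unfolding inv_apply_ones_def
proof (rule the_equality)
  fix w
  assume w: "(\<forall>i>N. w i = 0) \<and> (\<forall>i\<le>N. (\<Sum>j\<le>N. kernel_matrix a \<alpha> \<beta> t i j * w j) = 1)"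
  define u where "u i = w i - v i" for i
  have "(\<Sum>j\<le>N. kernel_matrix a \<alpha> \<beta> t i j * u j) = 0" if "i \<le> N" for i
    using w solves[OF that] that by (simp add: u_def right_diff_distrib sum_subtractf)
  then have "\<not> 0 < (\<Sum>i\<le>N. u i * (\<Sum>j\<le>N. kernel_matrix a \<alpha> \<beta> t i j * u j))"
    by simp
  then have "u i = 0" if "i \<le> N" for i
    using kernel_matrix_form_pos[OF assms(1-3) that] by blast
  then show "w = v"
    using w support by (intro ext) (metis u_def eq_iff_diff_eq_0 not_le)
qed (use support solves in blast)

lemma kernel_matrix_solution_sum_pos:
  assumes "\<bar>a\<bar> < 1" "0 < \<alpha> + \<beta>" "0 \<le> t"
    and solves: "\<And>i. i \<le> N \<Longrightarrow> (\<Sum>j\<le>N. kernel_matrix a \<alpha> \<beta> t i j * v j) = 1"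
  shows "0 < (\<Sum>i\<le>N. v i)"
proof -
  have "\<exists>i\<le>N. v i \<noteq> 0"
  proof (rule ccontr)
    assume "\<not> (\<exists>i\<le>N. v i \<noteq> 0)"
    then have "(\<Sum>j\<le>N. kernel_matrix a \<alpha> \<beta> t 0 j * v j) = 0"
      by simp
    with solves[of 0] show False
      by simp
  qed
  then obtain i where "i \<le> N" "v i \<noteq> 0"
    by blast
  then have "0 < (\<Sum>i\<le>N. v i * (\<Sum>j\<le>N. kernel_matrix a \<alpha> \<beta> t i j * v j))"
    by (rule kernel_matrix_form_pos[OF assms(1-3)])
  then show ?thesis
    by (simp add: solves)
qed

section \<open>Explicit solutions of the two linear systems\<close>

lemma past_sum_geometric:
  assumes "x \<noteq> a"
  shows "past_sum a (\<lambda>j. x ^ j) i = a * (x ^ i - a ^ i) / (x - a)"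
proof (induction i)
  case (Suc i)
  have "x - a \<noteq> 0"
    using assms by simp
  then show ?case
    unfolding past_sum_Suc Suc.IH by (simp add: field_simps)
qed simp

lemma future_sum_geometric:
  assumes "a * x \<noteq> 1" and "i \<le> N"
  shows "future_sum a N (\<lambda>j. x ^ j) i = (a * x ^ (i + 1) - a ^ (N - i + 1) * x ^ (N + 1)) / (1 - a * x)"
  using assms(2)
proof (induction i rule: inc_induct)
  case base
  then show ?case
    using assms(1) by simp
next
  case (step i)
  have "N - i + 1 = Suc (N - Suc i + 1)"
    using step.hyps(2) by simp
  moreover have "1 - a * x \<noteq> 0"
    using assms(1) by simp
  ultimately show ?case
    unfolding future_sum_step[OF step.hyps(2)] step.IH by (simp add: field_simps)
qed

text \<open>Subtracting \<open>a\<close> times row \<open>k + 1\<close> from row \<open>k\<close> of \<open>(\<Gamma> - \<Gamma>\<^sup>~ + 2\<theta> Id) \<omega> = 1\<close>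
  gives the recurrence \<open>c \<omega>\<^sub>k + a (1 - c) \<omega>\<^sub>k\<^sub>+\<^sub>1 = 1 - a\<close>, and the last row gives \<open>\<omega>\<^sub>N = 1 / c\<close>;
  here and below \<open>c = 1/2 + 2\<theta>\<close>.\<close>

definition omega_ratio :: "real \<Rightarrow> real \<Rightarrow> real" where
  "omega_ratio a c = a * (c - 1) / c"

definition omega_level :: "real \<Rightarrow> real \<Rightarrow> real" where
  "omega_level a c = (1 - a) / (c + a * (1 - c))"

definition omega_sol :: "real \<Rightarrow> real \<Rightarrow> nat \<Rightarrow> nat \<Rightarrow> real" where
  "omega_sol a c N k = omega_level a c + (1 / c - omega_level a c) * omega_ratio a c ^ (N - k)"

lemma omega_sol_recurrence:
  assumes "0 < a" "a < 1" "1/2 \<le> c" and "k < N"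
  shows "c * omega_sol a c N k + a * (1 - c) * omega_sol a c N (Suc k) = 1 - a"
proof -
  have "0 \<le> c * (1 - a)"
    using assms(2,3) by simp
  then have "c + a * (1 - c) \<noteq> 0"
    using assms(1) by (simp add: algebra_simps)
  then have "omega_level a c * (c + a * (1 - c)) = 1 - a"
    by (simp add: omega_level_def)
  moreover have "c * omega_ratio a c + a * (1 - c) = 0"
    using assms(3) by (simp add: omega_ratio_def field_simps)
  moreover have "N - k = Suc (N - Suc k)"
    using assms(4) by simp
  then have "c * (l + g * q ^ (N - k)) + a * (1 - c) * (l + g * q ^ (N - Suc k)) =
      l * (c + a * (1 - c)) + g * q ^ (N - Suc k) * (c * q + a * (1 - c))" for l g q :: real
    by (simp add: algebra_simps)
  ultimately show ?thesis
    unfolding omega_sol_def by simp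
qed

lemma omega_sol_solves:
  assumes "0 < a" "a < 1" "1/2 \<le> c" and "i \<le> N"
  shows "(\<Sum>j\<le>N. kernel_matrix a 0 1 (c - 1/2) i j * omega_sol a c N j) = 1"
proof -
  have "c * omega_sol a c N i + future_sum a N (omega_sol a c N) i = 1"
    using assms(4)
  proof (induction i rule: inc_induct)
    case base
    then show ?case
      using assms(3) by (simp add: omega_sol_def)
  next
    case (step i)
    have "c * omega_sol a c N i + future_sum a N (omega_sol a c N) i =
        (c * omega_sol a c N i + a * (1 - c) * omega_sol a c N (Suc i))
      + a * (c * omega_sol a c N (Suc i) + future_sum a N (omega_sol a c N) (Suc i))"
      unfolding future_sum_step[OF step.hyps(2)] by (simp add: algebra_simps)
    then show ?case
      unfolding omega_sol_recurrence[OF assms(1-3) step.hyps(2)] step.IH by simp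
  qed
  then show ?thesis
    by (simp add: kernel_matrix_row[OF assms(4)])
qed
text \<open>By \<open>kernel_matrix_geometric\<close>, the matrix \<open>\<Gamma> + \<Gamma>\<^sup>~ + 2\<theta> Id\<close> maps \<open>x\<^sup>j\<close> to
  \<open>x\<^sup>i * row_symbol a c x\<close> plus one boundary term at each end, and \<open>row_symbol a c\<close> vanishes
  exactly at the roots of \<open>char_poly a c\<close>.  So \<open>\<nu>\<close> is a constant plus a combination of the two
  geometric sequences at these roots, whose coefficients are fixed by cancelling the boundary terms.\<close>

definition char_coeff :: "real \<Rightarrow> real \<Rightarrow> real" where
  "char_coeff a c = c + 1 + (c - 2) * a^2"

definition char_disc :: "real \<Rightarrow> real \<Rightarrow> real" where
  "char_disc a c = char_coeff a c ^ 2 - 4 * a^2 * c * (c - 1)"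

definition char_poly :: "real \<Rightarrow> real \<Rightarrow> real \<Rightarrow> real" where
  "char_poly a c x = - a * c * x^2 + char_coeff a c * x + a * (1 - c)"

definition char_root1 :: "real \<Rightarrow> real \<Rightarrow> real" where
  "char_root1 a c = (char_coeff a c + sqrt (char_disc a c)) / (2 * a * c)"

definition char_root2 :: "real \<Rightarrow> real \<Rightarrow> real" where
  "char_root2 a c = (char_coeff a c - sqrt (char_disc a c)) / (2 * a * c)"

definition row_symbol :: "real \<Rightarrow> real \<Rightarrow> real \<Rightarrow> real" where
  "row_symbol a c x = 2 * a / (x - a) + (c + 1) + a * x / (1 - a * x)"

definition head_coeff :: "real \<Rightarrow> real \<Rightarrow> real" where
  "head_coeff a x = 1 / (x - a)"

definition tail_coeff :: "real \<Rightarrow> nat \<Rightarrow> real \<Rightarrow> real" where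
  "tail_coeff a N x = x ^ (N + 1) / (1 - a * x)"

definition nu_K :: "real \<Rightarrow> real \<Rightarrow> real" where
  "nu_K a c = 1 / (c * (1 - a) + 1 + 2 * a)"

definition nu_det :: "real \<Rightarrow> real \<Rightarrow> nat \<Rightarrow> real" where
  "nu_det a c N = head_coeff a (char_root1 a c) * tail_coeff a N (char_root2 a c)
                - head_coeff a (char_root2 a c) * tail_coeff a N (char_root1 a c)"

definition nu_alpha :: "real \<Rightarrow> real \<Rightarrow> nat \<Rightarrow> real" where
  "nu_alpha a c N =
     nu_K a c * (head_coeff a (char_root2 a c) - tail_coeff a N (char_root2 a c)) / nu_det a c N"

definition nu_beta :: "real \<Rightarrow> real \<Rightarrow> nat \<Rightarrow> real" where
  "nu_beta a c N =
     nu_K a c * (tail_coeff a N (char_root1 a c) - head_coeff a (char_root1 a c)) / nu_det a c N"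

definition nu_sol :: "real \<Rightarrow> real \<Rightarrow> nat \<Rightarrow> nat \<Rightarrow> real" where
  "nu_sol a c N k =
     (1 - a) * nu_K a c + nu_alpha a c N * char_root1 a c ^ k + nu_beta a c N * char_root2 a c ^ k"

lemma char_poly_square:
  "4 * a * c * char_poly a c x = char_disc a c - (char_coeff a c - 2 * a * c * x)^2"
  unfolding char_poly_def char_disc_def by (simp add: algebra_simps power2_eq_square)

lemma char_poly_at_self: "char_poly a c a = 2 * a * (1 - a^2)"
  unfolding char_poly_def char_coeff_def by (simp add: algebra_simps power2_eq_square power3_eq_cube)

lemma char_poly_at_inverse: "a \<noteq> 0 \<Longrightarrow> char_poly a c (1 / a) = 1 / a - a"
  unfolding char_poly_def char_coeff_def by (simp add: field_simps power2_eq_square)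

lemma char_poly_at_1: "char_poly a c 1 = (1 - a) * (c * (1 - a) + 1 + 2 * a)"
  unfolding char_poly_def char_coeff_def by (simp add: algebra_simps power2_eq_square)

lemma char_poly_diff_at_1: "char_poly a c x - char_poly a c 1 = (x - 1) * (char_coeff a c - a * c * (x + 1))"
  unfolding char_poly_def by (simp add: algebra_simps power2_eq_square)

lemma row_symbol_eq:
  assumes "x \<noteq> a" "a * x \<noteq> 1"
  shows "row_symbol a c x = char_poly a c x / ((x - a) * (1 - a * x))"
  using assms unfolding row_symbol_def char_poly_def char_coeff_def
  by (simp add: field_simps power2_eq_square)

lemma kernel_matrix_geometric:
  assumes "x \<noteq> a" "a * x \<noteq> 1" "i \<le> N"
  shows "(\<Sum>j\<le>N. kernel_matrix a 2 1 (c - 1/2) i j * x ^ j) =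
           x ^ i * row_symbol a c x - 2 * a ^ (i + 1) * head_coeff a x - a ^ (N - i + 1) * tail_coeff a N x"
proof -
  have "2 * (a * (x ^ i - a ^ i) / (x - a)) = (2 * a * x ^ i - 2 * a ^ (i + 1)) / (x - a)"
    by (simp add: algebra_simps)
  also have "\<dots> = x ^ i * (2 * a / (x - a)) - 2 * a ^ (i + 1) * head_coeff a x"
    by (simp add: head_coeff_def diff_divide_distrib)
  finally have past: "2 * (a * (x ^ i - a ^ i) / (x - a)) =
                        x ^ i * (2 * a / (x - a)) - 2 * a ^ (i + 1) * head_coeff a x" .
  have future: "(a * x ^ (i + 1) - a ^ (N - i + 1) * x ^ (N + 1)) / (1 - a * x) =
                  x ^ i * (a * x / (1 - a * x)) - a ^ (N - i + 1) * tail_coeff a N x"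
    by (simp add: tail_coeff_def diff_divide_distrib mult_ac)
  have diagonal: "2/2 + 1/2 + (c - 1/2) = c + (1::real)"
    by simp
  have "(\<Sum>j\<le>N. kernel_matrix a 2 1 (c - 1/2) i j * x ^ j) =
          2 * (a * (x ^ i - a ^ i) / (x - a)) + (c + 1) * x ^ i
        + (a * x ^ (i + 1) - a ^ (N - i + 1) * x ^ (N + 1)) / (1 - a * x)"
    unfolding kernel_matrix_row[OF assms(3)] past_sum_geometric[OF assms(1)]
      future_sum_geometric[OF assms(2,3)] diagonal by simp
  also have "\<dots> = x ^ i * row_symbol a c x - 2 * a ^ (i + 1) * head_coeff a x - a ^ (N - i + 1) * tail_coeff a N x"
    unfolding past future row_symbol_def distrib_left by (simp add: distrib_right mult.commute)
  finally show ?thesis .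
qed

context
  fixes a c :: real
  assumes a_pos: "0 < a" and a_lt_1: "a < 1" and c_ge: "1/2 \<le> c"
begin

private lemma c_pos: "0 < c"
  using c_ge by simp

lemma char_disc_pos: "0 < char_disc a c"
proof -
  have "0 < 4 * a * c * char_poly a c a"
    using a_pos a_lt_1 c_pos by (simp add: char_poly_at_self power_less_one_iff abs_if)
  then have "(char_coeff a c - 2 * a * c * a)^2 < char_disc a c"
    unfolding char_poly_square by simp
  moreover have "0 \<le> (char_coeff a c - 2 * a * c * a)^2"
    by simp
  ultimately show ?thesis
    by linarith
qed

lemma between_char_roots:
  assumes "0 < char_poly a c x"
  shows "char_root2 a c < x" and "x < char_root1 a c"
proof -
  have "0 < 4 * a * c * char_poly a c x"
    using a_pos c_pos assms by simp
  then have "(char_coeff a c - 2 * a * c * x)^2 < sqrt (char_disc a c) ^ 2"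
    unfolding char_poly_square using char_disc_pos by simp
  then have "\<bar>char_coeff a c - 2 * a * c * x\<bar>^2 < sqrt (char_disc a c) ^ 2"
    by simp
  then have "\<bar>char_coeff a c - 2 * a * c * x\<bar> < sqrt (char_disc a c)"
    by (rule power2_less_imp_less) (use char_disc_pos in simp)
  then have "char_coeff a c - sqrt (char_disc a c) < 2 * a * c * x"
    and "2 * a * c * x < char_coeff a c + sqrt (char_disc a c)"
    by linarith+
  moreover have "0 < 2 * a * c"
    using a_pos c_pos by simp
  ultimately show "char_root2 a c < x" "x < char_root1 a c"
    unfolding char_root1_def char_root2_def by (simp_all add: field_simps)
qed

lemma char_root2_lt: "char_root2 a c < a"
  using a_pos a_lt_1 by (intro between_char_roots) (simp add: char_poly_at_self power_less_one_iff abs_if)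

lemma inverse_lt_char_root1: "1 / a < char_root1 a c"
proof (intro between_char_roots)
  have "a * a < 1 * 1"
    using a_pos a_lt_1 by (intro mult_strict_mono) auto
  then show "0 < char_poly a c (1 / a)"
    using a_pos by (simp add: char_poly_at_inverse field_simps)
qed

lemma one_lt_mult_char_root1: "1 < a * char_root1 a c"
  using inverse_lt_char_root1 a_pos by (simp add: field_simps)

lemma one_lt_char_root1: "1 < char_root1 a c"
proof (rule ccontr)
  assume "\<not> 1 < char_root1 a c"
  then have "a * char_root1 a c \<le> a * 1"
    using a_pos by (intro mult_left_mono) auto
  then show False
    using one_lt_mult_char_root1 a_lt_1 by simp
qed

lemma char_root_mult: "char_root1 a c * char_root2 a c = (c - 1) / c"
proof -
  have "sqrt (char_disc a c) ^ 2 = char_disc a c"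
    using char_disc_pos by simp
  then have prod: "(char_coeff a c + sqrt (char_disc a c)) * (char_coeff a c - sqrt (char_disc a c)) =
                     4 * a^2 * c * (c - 1)"
    by (simp add: algebra_simps power2_eq_square char_disc_def)
  have "char_root1 a c * char_root2 a c =
          (char_coeff a c + sqrt (char_disc a c)) * (char_coeff a c - sqrt (char_disc a c)) / (2 * a * c)^2"
    unfolding char_root1_def char_root2_def by (simp add: power2_eq_square)
  also have "\<dots> = (c - 1) / c"
    unfolding prod using a_pos c_pos by (simp add: field_simps power2_eq_square)
  finally show ?thesis .
qed

lemma char_poly_root1: "char_poly a c (char_root1 a c) = 0"
  and char_poly_root2: "char_poly a c (char_root2 a c) = 0"
proof -
  have "sqrt (char_disc a c) ^ 2 = char_disc a c"
    using char_disc_pos by simp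
  then have "4 * a * c * char_poly a c (char_root1 a c) = 0"
    and "4 * a * c * char_poly a c (char_root2 a c) = 0"
    unfolding char_poly_square char_root1_def char_root2_def using a_pos c_pos
    by (simp_all add: field_simps abs_of_pos[OF char_disc_pos])
  then show "char_poly a c (char_root1 a c) = 0" "char_poly a c (char_root2 a c) = 0"
    using a_pos c_pos by simp_all
qed

lemma abs_char_root2_lt_1: "\<bar>char_root2 a c\<bar> < 1"
proof (rule ccontr)
  assume "\<not> \<bar>char_root2 a c\<bar> < 1"
  then have "1 * char_root1 a c \<le> \<bar>char_root2 a c\<bar> * char_root1 a c"
    using one_lt_char_root1 by (intro mult_right_mono) auto
  also have "\<dots> = \<bar>char_root1 a c * char_root2 a c\<bar>"
    using one_lt_char_root1 by (simp add: abs_mult)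
  also have "\<dots> = \<bar>c - 1\<bar> / c"
    using c_pos by (simp add: char_root_mult)
  also have "\<dots> \<le> 1"
    using c_ge by (simp add: abs_if field_simps)
  finally show False
    using one_lt_char_root1 by simp
qed

lemma mult_char_root2_lt_1: "a * char_root2 a c < 1"
proof -
  have "a * char_root2 a c \<le> a * \<bar>char_root2 a c\<bar>"
    using a_pos by (simp add: mult_left_mono)
  also have "\<dots> < 1 * 1"
    using a_pos a_lt_1 abs_char_root2_lt_1 by (intro mult_strict_mono) auto
  finally show ?thesis
    by simp
qed

lemma nu_det_neg: "nu_det a c N < 0"
proof -
  let ?r1 = "char_root1 a c" and ?r2 = "char_root2 a c"
  have p1: "0 < ?r1 - a" and p2: "0 < a - ?r2" and p3: "0 < a * ?r1 - 1" and p4: "0 < 1 - a * ?r2"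
    using one_lt_char_root1 a_lt_1 char_root2_lt one_lt_mult_char_root1 mult_char_root2_lt_1 by auto
  have "(?r1 - a) * (1 - a * ?r2) - (a - ?r2) * (a * ?r1 - 1) = (?r1 - ?r2) * (1 - a^2)"
    by (simp add: algebra_simps power2_eq_square)
  moreover have "0 < (?r1 - ?r2) * (1 - a^2)"
    using p1 p2 a_pos a_lt_1 by (simp add: power_less_one_iff abs_if)
  ultimately have dens: "(a - ?r2) * (a * ?r1 - 1) < (?r1 - a) * (1 - a * ?r2)"
    by linarith
  have "head_coeff a ?r1 * tail_coeff a N ?r2 = ?r2 ^ (N + 1) / ((?r1 - a) * (1 - a * ?r2))"
    unfolding head_coeff_def tail_coeff_def by simp
  also have "\<dots> \<le> \<bar>?r2\<bar> ^ (N + 1) / ((?r1 - a) * (1 - a * ?r2))"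
    using p1 p4 by (intro divide_right_mono) (auto simp: power_abs[symmetric] simp del: power_Suc)
  also have "\<dots> \<le> \<bar>?r2\<bar> ^ (N + 1) / ((a - ?r2) * (a * ?r1 - 1))"
    using dens p1 p2 p3 p4 by (intro divide_left_mono mult_pos_pos) auto
  also have "\<dots> < ?r1 ^ (N + 1) / ((a - ?r2) * (a * ?r1 - 1))"
    using p2 p3 abs_char_root2_lt_1 one_lt_char_root1
    by (intro divide_strict_right_mono power_strict_mono) auto
  also have "\<dots> = head_coeff a ?r2 * tail_coeff a N ?r1"
    unfolding head_coeff_def tail_coeff_def using p2 p3 by (simp add: field_simps)
  finally show ?thesis
    unfolding nu_det_def by simp
qed

lemma row_symbol_char_root1: "row_symbol a c (char_root1 a c) = 0"
  and row_symbol_char_root2: "row_symbol a c (char_root2 a c) = 0"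
  using one_lt_char_root1 a_lt_1 one_lt_mult_char_root1 char_root2_lt mult_char_root2_lt_1
  by (simp_all add: row_symbol_eq char_poly_root1 char_poly_root2)

lemma nu_K_row_symbol_1: "(1 - a) * nu_K a c * row_symbol a c 1 = 1"
proof -
  have "row_symbol a c 1 * (1 - a) = 2 * a / (1 - a) * (1 - a) + (c + 1) * (1 - a) + a / (1 - a) * (1 - a)"
    unfolding row_symbol_def by (simp only: distrib_right mult_1_right)
  also have "\<dots> = 2 * a + (c + 1) * (1 - a) + a"
    using a_lt_1 by simp
  finally have "row_symbol a c 1 * (1 - a) = c * (1 - a) + 1 + 2 * a"
    by (simp add: algebra_simps)
  moreover have "0 < c * (1 - a) + 1 + 2 * a"
    using a_pos a_lt_1 c_pos by (simp add: add_pos_pos)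
  ultimately show ?thesis
    unfolding nu_K_def by (simp add: field_simps)
qed

lemma nu_boundary_conditions:
  "nu_K a c + nu_alpha a c N * head_coeff a (char_root1 a c) + nu_beta a c N * head_coeff a (char_root2 a c) = 0"
  "nu_K a c + nu_alpha a c N * tail_coeff a N (char_root1 a c) + nu_beta a c N * tail_coeff a N (char_root2 a c) = 0"
  using nu_det_neg[of N] unfolding nu_alpha_def nu_beta_def nu_det_def by (simp_all add: field_simps)

lemma nu_sol_solves:
  assumes "i \<le> N"
  shows "(\<Sum>j\<le>N. kernel_matrix a 2 1 (c - 1/2) i j * nu_sol a c N j) = 1"
proof -
  let ?M = "\<lambda>j. kernel_matrix a 2 1 (c - 1/2) i j"
  let ?r1 = "char_root1 a c" and ?r2 = "char_root2 a c"
  have "?r1 \<noteq> a" "a * ?r1 \<noteq> 1" "?r2 \<noteq> a" "a * ?r2 \<noteq> 1" "1 \<noteq> a" "a * 1 \<noteq> 1"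
    using one_lt_char_root1 a_lt_1 one_lt_mult_char_root1 char_root2_lt mult_char_root2_lt_1 by auto
  note geometric = kernel_matrix_geometric[OF this(1,2) assms] kernel_matrix_geometric[OF this(3,4) assms]
    kernel_matrix_geometric[OF this(5,6) assms]
  have "(1 - a) * head_coeff a 1 = 1" "(1 - a) * tail_coeff a N 1 = 1"
    using a_lt_1 by (simp_all add: head_coeff_def tail_coeff_def)
  moreover have "(1 - a) * nu_K a c * (1 ^ i * X - 2 * A * h - B * t) =
      (1 - a) * nu_K a c * X - 2 * A * nu_K a c * ((1 - a) * h) - B * nu_K a c * ((1 - a) * t)"
    for X A B h t :: real
    by (simp add: algebra_simps)
  ultimately have const: "(1 - a) * nu_K a c * (\<Sum>j\<le>N. ?M j * 1 ^ j) =
      (1 - a) * nu_K a c * row_symbol a c 1 - 2 * a ^ (i + 1) * nu_K a c - a ^ (N - i + 1) * nu_K a c"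
    unfolding geometric(3) by simp
  have "(\<Sum>j\<le>N. ?M j * nu_sol a c N j) =
          (\<Sum>j\<le>N. (1 - a) * nu_K a c * (?M j * 1 ^ j)
                  + nu_alpha a c N * (?M j * ?r1 ^ j) + nu_beta a c N * (?M j * ?r2 ^ j))"
    by (rule sum.cong) (simp_all add: nu_sol_def algebra_simps)
  also have "\<dots> = (1 - a) * nu_K a c * (\<Sum>j\<le>N. ?M j * 1 ^ j)
        + nu_alpha a c N * (\<Sum>j\<le>N. ?M j * ?r1 ^ j) + nu_beta a c N * (\<Sum>j\<le>N. ?M j * ?r2 ^ j)"
    by (simp only: sum.distrib sum_distrib_left)
  also have "\<dots> = (1 - a) * nu_K a c * row_symbol a c 1
      - 2 * a ^ (i + 1) * (nu_K a c + nu_alpha a c N * head_coeff a ?r1 + nu_beta a c N * head_coeff a ?r2)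
      - a ^ (N - i + 1) * (nu_K a c + nu_alpha a c N * tail_coeff a N ?r1 + nu_beta a c N * tail_coeff a N ?r2)"
    unfolding const geometric(1,2) row_symbol_char_root1 row_symbol_char_root2 by (simp add: algebra_simps)
  also have "\<dots> = 1"
    by (simp add: nu_boundary_conditions nu_K_row_symbol_1)
  finally show ?thesis .
qed
end

section \<open>The expected cost in terms of the explicit solutions\<close>

definition nu_sum :: "real \<Rightarrow> real \<Rightarrow> nat \<Rightarrow> real" where
  "nu_sum a c N = (\<Sum>k\<le>N. nu_sol a c N k)"

definition nu_sq_sum :: "real \<Rightarrow> real \<Rightarrow> nat \<Rightarrow> real" where
  "nu_sq_sum a c N = (\<Sum>k\<le>N. (nu_sol a c N k)^2)"

definition omega_sum :: "real \<Rightarrow> real \<Rightarrow> nat \<Rightarrow> real" where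
  "omega_sum a c N = (\<Sum>k\<le>N. omega_sol a c N k)"

definition omega_sq_sum :: "real \<Rightarrow> real \<Rightarrow> nat \<Rightarrow> real" where
  "omega_sq_sum a c N = (\<Sum>k\<le>N. (omega_sol a c N k)^2)"

definition nu_omega_sum :: "real \<Rightarrow> real \<Rightarrow> nat \<Rightarrow> real" where
  "nu_omega_sum a c N = (\<Sum>k\<le>N. nu_sol a c N k * omega_sol a c N k)"

definition moment_cost :: "real \<Rightarrow> real \<Rightarrow> real \<Rightarrow> real \<Rightarrow> real \<Rightarrow> nat \<Rightarrow> real" where
  "moment_cost \<theta> x y a c N =
     ((x + y) / 2)^2 * (2 / (3 * nu_sum a c N) - \<theta> / 3 * (nu_sq_sum a c N / nu_sum a c N ^ 2))
   + ((x + y) / 2) * ((x - y) / 2) *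
       (2 / omega_sum a c N - 2 * \<theta> * (nu_omega_sum a c N / (nu_sum a c N * omega_sum a c N)))
   + ((x - y) / 2)^2 * \<theta> * (omega_sq_sum a c N / omega_sum a c N ^ 2)"

lemma v_vec_eq:
  assumes "N > 0" "0 < \<rho> * T" "0 \<le> \<theta>"
  defines "a \<equiv> grid_decay (\<rho> * T) N" and "c \<equiv> 1/2 + 2 * \<theta>"
  shows "v_vec \<rho> T \<theta> N k = (if k \<le> N then nu_sol a c N k / nu_sum a c N else 0)"
proof -
  have "0 < a" "a < 1" "1/2 \<le> c"
    using assms by (simp_all add: a_def c_def grid_decay_def)
  have matrix: "(\<lambda>i j. Gam \<rho> T N i j + gtil \<rho> T N i j + (if i = j then 2 * \<theta> else 0)) =
                  kernel_matrix a 2 1 (c - 1/2)"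
    unfolding Gam_def kernel_matrix_def a_def c_def gtil_eq_decay_kernel[OF assms(1)] by (intro ext) simp
  have "(\<Sum>j\<le>N. kernel_matrix a 2 1 (c - 1/2) i j * (if j \<le> N then nu_sol a c N j else 0)) = 1"
    if "i \<le> N" for i
    using nu_sol_solves[OF \<open>0 < a\<close> \<open>a < 1\<close> \<open>1/2 \<le> c\<close> that] by simp
  then have "nu_vec \<rho> T \<theta> N = (\<lambda>k. if k \<le> N then nu_sol a c N k else 0)"
    unfolding nu_vec_def a_def[symmetric] matrix
    by (intro inv_apply_ones_kernel_matrix) (use \<open>0 < a\<close> \<open>a < 1\<close> \<open>1/2 \<le> c\<close> in auto)
  then show ?thesis
    by (simp add: v_vec_def nu_sum_def)
qed
lemma w_vec_eq:
  assumes "N > 0" "0 < \<rho> * T" "0 \<le> \<theta>"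
  defines "a \<equiv> grid_decay (\<rho> * T) N" and "c \<equiv> 1/2 + 2 * \<theta>"
  shows "w_vec \<rho> T \<theta> N k = (if k \<le> N then omega_sol a c N k / omega_sum a c N else 0)"
proof -
  have "0 < a" "a < 1" "1/2 \<le> c"
    using assms by (simp_all add: a_def c_def grid_decay_def)
  have matrix: "(\<lambda>i j. Gam \<rho> T N i j - gtil \<rho> T N i j + (if i = j then 2 * \<theta> else 0)) =
                  kernel_matrix a 0 1 (c - 1/2)"
    unfolding Gam_def kernel_matrix_def a_def c_def gtil_eq_decay_kernel[OF assms(1)] by (intro ext) simp
  have "(\<Sum>j\<le>N. kernel_matrix a 0 1 (c - 1/2) i j * (if j \<le> N then omega_sol a c N j else 0)) = 1"
    if "i \<le> N" for i
    using omega_sol_solves[OF \<open>0 < a\<close> \<open>a < 1\<close> \<open>1/2 \<le> c\<close> that] by simp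
  then have "omega_vec \<rho> T \<theta> N = (\<lambda>k. if k \<le> N then omega_sol a c N k else 0)"
    unfolding omega_vec_def a_def[symmetric] matrix
    by (intro inv_apply_ones_kernel_matrix) (use \<open>0 < a\<close> \<open>a < 1\<close> \<open>1/2 \<le> c\<close> in auto)
  then show ?thesis
    by (simp add: w_vec_def omega_sum_def)
qed
lemma nu_sum_pos:
  assumes "0 < a" "a < 1" "1/2 \<le> c"
  shows "0 < nu_sum a c N"
  unfolding nu_sum_def using assms
  by (intro kernel_matrix_solution_sum_pos[of a 2 1 "c - 1/2"]) (auto simp: nu_sol_solves)

lemma omega_sum_pos:
  assumes "0 < a" "a < 1" "1/2 \<le> c"
  shows "0 < omega_sum a c N"
  unfolding omega_sum_def using assms
  by (intro kernel_matrix_solution_sum_pos[of a 0 1 "c - 1/2"]) (auto simp: omega_sol_solves)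

lemma exp_cost_eq_past_sum:
  assumes "N > 0"
  shows "exp_cost \<rho> T \<theta> N s0 x \<xi> \<eta> = x * s0 + (\<Sum>k\<le>N.
           1/2 * (\<xi> k)^2 - (s0 - past_sum (grid_decay (\<rho> * T) N) (\<lambda>j. \<xi> j + \<eta> j) k) * \<xi> k
         + 1/2 * \<xi> k * \<eta> k + \<theta> * (\<xi> k)^2)"
proof -
  have "exp (- \<rho> * (real k * T / real N - real j * T / real N)) = grid_decay (\<rho> * T) N ^ (k - j)"
    if "j < k" for j k
  proof -
    have "- \<rho> * (real k * T / real N - real j * T / real N) = real (k - j) * (- (\<rho> * T) / real N)"
      using that assms by (simp add: field_simps)
    then show ?thesis
      unfolding grid_decay_def by (simp only: exp_of_nat_mult)
  qed
  then have "(\<Sum>j<k. exp (- \<rho> * (real k * T / real N - real j * T / real N)) * (\<xi> j + \<eta> j)) =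
               past_sum (grid_decay (\<rho> * T) N) (\<lambda>j. \<xi> j + \<eta> j) k" for k
    unfolding past_sum_def by (intro sum.cong) auto
  then show ?thesis
    unfolding exp_cost_def by simp
qed

text \<open>For \<open>\<xi> = s v + d w\<close> and \<open>\<eta> = s v - d w\<close> the price impact only sees \<open>\<xi> + \<eta> = 2 s v\<close>,
  so only the past sums of \<open>v\<close> enter the cost.\<close>

lemma cost_of_split:
  fixes v w :: "nat \<Rightarrow> real"
  assumes "(\<Sum>k\<le>N. v k) = 1" "(\<Sum>k\<le>N. w k) = 1" and "x = s + d"
  shows "x * s0 + (\<Sum>k\<le>N.
        1/2 * (s * v k + d * w k)^2
      - (s0 - past_sum a (\<lambda>j. (s * v j + d * w j) + (s * v j - d * w j)) k) * (s * v k + d * w k)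
      + 1/2 * (s * v k + d * w k) * (s * v k - d * w k) + \<theta> * (s * v k + d * w k)^2)
    = s^2 * (1 + \<theta>) * (\<Sum>k\<le>N. (v k)^2) + s^2 * 2 * (\<Sum>k\<le>N. v k * past_sum a v k)
      + s * d * (1 + 2 * \<theta>) * (\<Sum>k\<le>N. v k * w k) + s * d * 2 * (\<Sum>k\<le>N. w k * past_sum a v k)
      + d^2 * \<theta> * (\<Sum>k\<le>N. (w k)^2)"
proof -
  have "past_sum a (\<lambda>j. (s * v j + d * w j) + (s * v j - d * w j)) k = 2 * s * past_sum a v k" for k
    unfolding past_sum_def by (simp add: sum_distrib_left algebra_simps)
  then have pointwise: "1/2 * (s * v k + d * w k)^2
      - (s0 - past_sum a (\<lambda>j. (s * v j + d * w j) + (s * v j - d * w j)) k) * (s * v k + d * w k)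
      + 1/2 * (s * v k + d * w k) * (s * v k - d * w k) + \<theta> * (s * v k + d * w k)^2
    = s^2 * (1 + \<theta>) * (v k)^2 + s^2 * 2 * (v k * past_sum a v k) + s * d * (1 + 2 * \<theta>) * (v k * w k)
      + s * d * 2 * (w k * past_sum a v k) + d^2 * \<theta> * (w k)^2 - s0 * s * v k - s0 * d * w k" for k
    by (simp add: algebra_simps power2_eq_square)
  have "(\<Sum>k\<le>N. s^2 * (1 + \<theta>) * (v k)^2 + s^2 * 2 * (v k * past_sum a v k)
      + s * d * (1 + 2 * \<theta>) * (v k * w k) + s * d * 2 * (w k * past_sum a v k) + d^2 * \<theta> * (w k)^2
      - s0 * s * v k - s0 * d * w k)
    = s^2 * (1 + \<theta>) * (\<Sum>k\<le>N. (v k)^2) + s^2 * 2 * (\<Sum>k\<le>N. v k * past_sum a v k)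
      + s * d * (1 + 2 * \<theta>) * (\<Sum>k\<le>N. v k * w k) + s * d * 2 * (\<Sum>k\<le>N. w k * past_sum a v k)
      + d^2 * \<theta> * (\<Sum>k\<le>N. (w k)^2) - s0 * s * (\<Sum>k\<le>N. v k) - s0 * d * (\<Sum>k\<le>N. w k)"
    by (simp only: sum.distrib sum_subtractf sum_distrib_left)
  then show ?thesis
    unfolding pointwise assms(1,2) using assms(3) by (simp add: algebra_simps)
qed

lemma nu_form_identity:
  assumes rows: "\<And>i. i \<le> N \<Longrightarrow> (\<Sum>j\<le>N. kernel_matrix a 2 1 t i j * v j) = \<kappa>"
    and "(\<Sum>k\<le>N. v k) = 1"
  shows "3 * (\<Sum>k\<le>N. v k * past_sum a v k) + (3/2 + t) * (\<Sum>k\<le>N. (v k)^2) = \<kappa>"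
proof -
  have "(\<Sum>i\<le>N. v i * (\<Sum>j\<le>N. kernel_matrix a 2 1 t i j * v j)) = (\<Sum>i\<le>N. v i * \<kappa>)"
    by (intro sum.cong) (simp_all add: rows)
  also have "\<dots> = \<kappa>"
    using assms(2) by (simp add: sum_distrib_right[symmetric])
  finally have "(\<Sum>i\<le>N. v i * (\<Sum>j\<le>N. kernel_matrix a 2 1 t i j * v j)) = \<kappa>" .
  moreover have "(\<Sum>i\<le>N. v i * (\<Sum>j\<le>N. decay_kernel a i j * v j)) =
                   (\<Sum>i\<le>N. v i * past_sum a v i + (v i)^2 / 2)"
    by (intro sum.cong refl) (subst decay_kernel_row, auto simp: power2_eq_square algebra_simps)
  moreover have "(\<Sum>i\<le>N. v i * past_sum a v i + (v i)^2 / 2) =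
                   (\<Sum>k\<le>N. v k * past_sum a v k) + (\<Sum>k\<le>N. (v k)^2) / 2"
    by (simp add: sum.distrib sum_divide_distrib)
  ultimately show ?thesis
    unfolding kernel_matrix_form by (simp add: algebra_simps)
qed

lemma omega_form_identity:
  assumes rows: "\<And>i. i \<le> N \<Longrightarrow> (\<Sum>j\<le>N. kernel_matrix a 0 1 t i j * w j) = \<kappa>"
    and "(\<Sum>k\<le>N. v k) = 1"
  shows "(\<Sum>k\<le>N. w k * past_sum a v k) + (1/2 + t) * (\<Sum>k\<le>N. v k * w k) = \<kappa>"
proof -
  have transposed_row: "(\<Sum>j\<le>N. kernel_matrix a 0 1 t i j * w j) = (\<Sum>j\<le>N. decay_kernel a j i * w j) + t * w i"
    if "i \<le> N" for i
  proof -
    have "(\<Sum>j\<le>N. kernel_matrix a 0 1 t i j * w j) =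
            (\<Sum>j\<le>N. decay_kernel a j i * w j + (if j = i then t * w j else 0))"
      unfolding kernel_matrix_def by (intro sum.cong) (auto simp: algebra_simps)
    with that show ?thesis
      by (simp add: sum.distrib)
  qed
  have "\<kappa> = (\<Sum>i\<le>N. v i * \<kappa>)"
    using assms(2) by (simp add: sum_distrib_right[symmetric])
  also have "\<dots> = (\<Sum>i\<le>N. v i * ((\<Sum>j\<le>N. decay_kernel a j i * w j) + t * w i))"
    by (intro sum.cong) (simp_all add: rows[symmetric] transposed_row)
  also have "\<dots> = (\<Sum>i\<le>N. v i * (\<Sum>j\<le>N. decay_kernel a j i * w j)) + t * (\<Sum>k\<le>N. v k * w k)"
    by (simp add: algebra_simps sum.distrib sum_distrib_left)
  also have "(\<Sum>i\<le>N. v i * (\<Sum>j\<le>N. decay_kernel a j i * w j)) =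
               (\<Sum>j\<le>N. w j * (\<Sum>i\<le>N. decay_kernel a j i * v i))"
    unfolding sum_distrib_left by (subst sum.swap) (simp add: mult_ac)
  also have "\<dots> = (\<Sum>j\<le>N. w j * (past_sum a v j + v j / 2))"
    by (intro sum.cong refl) (subst decay_kernel_row, auto)
  also have "\<dots> = (\<Sum>k\<le>N. w k * past_sum a v k) + (\<Sum>k\<le>N. v k * w k) / 2"
    by (simp add: algebra_simps sum.distrib sum_divide_distrib)
  finally show ?thesis
    by (simp add: algebra_simps)
qed

text \<open>The two linear systems eliminate the past sums of \<open>v\<close> from the cost.\<close>

lemma cost_of_normalized_solutions:
  fixes v w :: "nat \<Rightarrow> real"
  assumes sums: "(\<Sum>k\<le>N. v k) = 1" "(\<Sum>k\<le>N. w k) = 1" and split: "x = s + d"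
    and nu_rows: "\<And>i. i \<le> N \<Longrightarrow> (\<Sum>j\<le>N. kernel_matrix a 2 1 (2 * \<theta>) i j * v j) = p"
    and omega_rows: "\<And>i. i \<le> N \<Longrightarrow> (\<Sum>j\<le>N. kernel_matrix a 0 1 (2 * \<theta>) i j * w j) = q"
  shows "x * s0 + (\<Sum>k\<le>N.
        1/2 * (s * v k + d * w k)^2
      - (s0 - past_sum a (\<lambda>j. (s * v j + d * w j) + (s * v j - d * w j)) k) * (s * v k + d * w k)
      + 1/2 * (s * v k + d * w k) * (s * v k - d * w k) + \<theta> * (s * v k + d * w k)^2)
    = s^2 * (2/3 * p - \<theta> / 3 * (\<Sum>k\<le>N. (v k)^2))
      + s * d * (2 * q - 2 * \<theta> * (\<Sum>k\<le>N. v k * w k)) + d^2 * \<theta> * (\<Sum>k\<le>N. (w k)^2)"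
proof -
  have past_sums: "(\<Sum>k\<le>N. v k * past_sum a v k) = (p - (3/2 + 2 * \<theta>) * (\<Sum>k\<le>N. (v k)^2)) / 3"
    "(\<Sum>k\<le>N. w k * past_sum a v k) = q - (1/2 + 2 * \<theta>) * (\<Sum>k\<le>N. v k * w k)"
    using nu_form_identity[OF nu_rows sums(1)] omega_form_identity[OF omega_rows sums(1)] by simp_all
  show ?thesis
    unfolding cost_of_split[OF sums split] past_sums by (simp add: field_simps)
qed

lemma eq_cost_eq_moments:
  assumes "N > 0" "0 < \<rho> * T" "0 \<le> \<theta>"
  shows "eq_cost \<rho> T \<theta> s0 x y N = moment_cost \<theta> x y (grid_decay (\<rho> * T) N) (1/2 + 2 * \<theta>) N"
proof -
  define a where "a = grid_decay (\<rho> * T) N"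
  define c where "c = 1/2 + 2 * \<theta>"
  define v where "v = v_vec \<rho> T \<theta> N"
  define w where "w = w_vec \<rho> T \<theta> N"
  have a: "0 < a" "a < 1" and c: "1/2 \<le> c"
    using assms by (simp_all add: a_def c_def grid_decay_def)
  have v: "v k = (if k \<le> N then nu_sol a c N k / nu_sum a c N else 0)"
    and w: "w k = (if k \<le> N then omega_sol a c N k / omega_sum a c N else 0)" for k
    unfolding v_def w_def a_def c_def by (rule v_vec_eq[OF assms] w_vec_eq[OF assms])+
  have "0 < nu_sum a c N" "0 < omega_sum a c N"
    using nu_sum_pos[OF a c] omega_sum_pos[OF a c] by auto
  then have "(\<Sum>k\<le>N. v k) = 1" "(\<Sum>k\<le>N. w k) = 1"
    by (simp_all add: v w nu_sum_def omega_sum_def flip: sum_divide_distrib)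
  moreover have "x = (x + y) / 2 + (x - y) / 2"
    by (simp add: field_simps)
  moreover have "(\<Sum>j\<le>N. kernel_matrix a 2 1 (2 * \<theta>) i j * v j) = 1 / nu_sum a c N"
    and "(\<Sum>j\<le>N. kernel_matrix a 0 1 (2 * \<theta>) i j * w j) = 1 / omega_sum a c N" if "i \<le> N" for i
    using nu_sol_solves[OF a c that] omega_sol_solves[OF a c that]
    by (simp_all add: v w c_def sum_divide_distrib[symmetric])
  ultimately have "eq_cost \<rho> T \<theta> s0 x y N =
        ((x + y) / 2)^2 * (2/3 * (1 / nu_sum a c N) - \<theta> / 3 * (\<Sum>k\<le>N. (v k)^2))
      + (x + y) / 2 * ((x - y) / 2) * (2 * (1 / omega_sum a c N) - 2 * \<theta> * (\<Sum>k\<le>N. v k * w k))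
      + ((x - y) / 2)^2 * \<theta> * (\<Sum>k\<le>N. (w k)^2)"
    unfolding eq_cost_def exp_cost_eq_past_sum[OF assms(1)] xiN_def etaN_def
      v_def[symmetric] w_def[symmetric] a_def[symmetric]
    by (rule cost_of_normalized_solutions)
  moreover have "(\<Sum>k\<le>N. (v k)^2) = nu_sq_sum a c N / nu_sum a c N ^ 2"
    "(\<Sum>k\<le>N. (w k)^2) = omega_sq_sum a c N / omega_sum a c N ^ 2"
    "(\<Sum>k\<le>N. v k * w k) = nu_omega_sum a c N / (nu_sum a c N * omega_sum a c N)"
    by (simp_all add: v w nu_sq_sum_def omega_sq_sum_def nu_omega_sum_def power_divide sum_divide_distrib)
  ultimately show ?thesis
    unfolding moment_cost_def a_def c_def by simp
qed

section \<open>Asymptotics of the explicit solutions\<close>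

lemma LIMSEQ_transform_pos:
  fixes f g :: "nat \<Rightarrow> real"
  assumes "\<And>N. 0 < N \<Longrightarrow> f N = g N" and "g \<longlonglongrightarrow> L"
  shows "f \<longlonglongrightarrow> L"
  using assms(2)
proof (rule Lim_transform_eventually)
  show "\<forall>\<^sub>F N in sequentially. g N = f N"
    using assms(1) by (intro eventually_sequentiallyI[of 1]) auto
qed

lemma LIMSEQ_power_exp:
  fixes y :: "nat \<Rightarrow> real"
  assumes pos: "\<And>N. 0 < N \<Longrightarrow> 0 < y N" and "y \<longlonglongrightarrow> 1"
    and L: "(\<lambda>N. real N * (y N - 1)) \<longlonglongrightarrow> L"
  shows "(\<lambda>N. y N ^ N) \<longlonglongrightarrow> exp L"
proof -
  have lower: "real N * (y N - 1) / y N \<le> real N * ln (y N)"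
    and upper: "real N * ln (y N) \<le> real N * (y N - 1)" if "0 < N" for N
  proof -
    have "0 < y N"
      using pos that by simp
    then have "ln (1 / y N) \<le> 1 / y N - 1" and "ln (y N) \<le> y N - 1"
      by (simp_all add: ln_le_minus_one)
    with \<open>0 < y N\<close> have "(y N - 1) / y N \<le> ln (y N)" and "ln (y N) \<le> y N - 1"
      by (simp_all add: ln_div diff_divide_distrib)
    then show "real N * (y N - 1) / y N \<le> real N * ln (y N)"
      and "real N * ln (y N) \<le> real N * (y N - 1)"
      by (simp_all add: mult_left_mono flip: times_divide_eq_right)
  qed
  have "(\<lambda>N. real N * (y N - 1) / y N) \<longlonglongrightarrow> L"
    using tendsto_divide[OF L assms(2)] by simp
  then have "(\<lambda>N. real N * ln (y N)) \<longlonglongrightarrow> L"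
  proof (rule tendsto_sandwich[OF _ _ _ L, rotated 2])
    show "\<forall>\<^sub>F N in sequentially. real N * (y N - 1) / y N \<le> real N * ln (y N)"
      by (rule eventually_sequentiallyI[of 1]) (rule lower, simp)
    show "\<forall>\<^sub>F N in sequentially. real N * ln (y N) \<le> real N * (y N - 1)"
      by (rule eventually_sequentiallyI[of 1]) (rule upper, simp)
  qed
  then have "(\<lambda>N. exp (real N * ln (y N))) \<longlonglongrightarrow> exp L"
    by (rule tendsto_exp)
  then show ?thesis
    by (rule LIMSEQ_transform_pos[rotated]) (simp add: pos exp_of_nat_mult)
qed

lemma eventually_abs_le_midpoint:
  fixes x :: "nat \<Rightarrow> real"
  assumes "x \<longlonglongrightarrow> l" and "\<bar>l\<bar> < 1"
  shows "\<forall>\<^sub>F N in sequentially. \<bar>x N\<bar> \<le> (1 + \<bar>l\<bar>) / 2"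
proof -
  have "\<forall>\<^sub>F N in sequentially. dist (x N) l < (1 - \<bar>l\<bar>) / 2"
    using assms by (intro tendstoD) auto
  then show ?thesis
  proof eventually_elim
    case (elim N)
    have "\<bar>x N\<bar> - \<bar>l\<bar> < (1 - \<bar>l\<bar>) / 2"
      using elim abs_triangle_ineq2[of "x N" l] by (simp add: dist_real_def)
    then show ?case
      by (simp add: field_simps)
  qed
qed

lemma LIMSEQ_power_Suc_zero:
  fixes x :: "nat \<Rightarrow> real"
  assumes "x \<longlonglongrightarrow> l" and "\<bar>l\<bar> < 1"
  shows "(\<lambda>N. x N ^ (N + 1)) \<longlonglongrightarrow> 0"
proof -
  define m where "m = (1 + \<bar>l\<bar>) / 2"
  have "0 \<le> m" "m < 1"
    using assms(2) by (simp_all add: m_def)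
  then have "(\<lambda>N. m * m ^ N) \<longlonglongrightarrow> m * 0"
    by (intro tendsto_intros LIMSEQ_power_zero) simp
  then have "(\<lambda>N. m * m ^ N) \<longlonglongrightarrow> 0"
    by simp
  then show ?thesis
  proof (rule tendsto_0_le[where K = 1])
    show "\<forall>\<^sub>F N in sequentially. norm (x N ^ (N + 1)) \<le> norm (m * m ^ N) * 1"
      using eventually_abs_le_midpoint[OF assms]
    proof eventually_elim
      case (elim N)
      then have "\<bar>x N\<bar> ^ (N + 1) \<le> m ^ (N + 1)"
        unfolding m_def by (intro power_mono) auto
      with \<open>0 \<le> m\<close> show ?case
        by (simp add: power_abs abs_mult)
    qed
  qed
qed

lemma Suc_over_n_tendsto: "(\<lambda>N. (real N + 1) / real N) \<longlonglongrightarrow> 1"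
  by real_asymp

lemma geometric_sum_atMost:
  fixes x :: real
  assumes "x \<noteq> 1"
  shows "(\<Sum>k\<le>N. x ^ k) = (x ^ (N + 1) - 1) / (x - 1)"
  using geometric_sum[OF assms, of "N + 1"] by (simp add: lessThan_Suc_atMost)

lemma sum_atMost_reflect:
  fixes f :: "nat \<Rightarrow> real"
  shows "(\<Sum>k\<le>N. f (N - k)) = (\<Sum>k\<le>N. f k)"
  using sum.atLeastAtMost_rev[of f 0 N] by (simp add: atMost_atLeast0)

lemma sum_square_expand:
  fixes p u v x y :: real
  shows "(\<Sum>k\<le>N. (p + u * x ^ k + v * y ^ k)^2) =
           (real N + 1) * p^2 + u^2 * (\<Sum>k\<le>N. (x^2) ^ k) + v^2 * (\<Sum>k\<le>N. (y^2) ^ k)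
         + 2 * p * u * (\<Sum>k\<le>N. x ^ k) + 2 * p * v * (\<Sum>k\<le>N. y ^ k) + 2 * u * v * (\<Sum>k\<le>N. (x * y) ^ k)"
proof -
  have "(p + u * x ^ k + v * y ^ k)^2 = p^2 + u^2 * (x^2) ^ k + v^2 * (y^2) ^ k
          + 2 * p * u * x ^ k + 2 * p * v * y ^ k + 2 * u * v * (x * y) ^ k" for k
    by (simp add: power2_eq_square algebra_simps)
  then show ?thesis
    by (simp add: sum.distrib sum_distrib_left)
qed

lemma sum_power_mult_power_diff:
  fixes x y :: real
  assumes "x \<noteq> y"
  shows "(\<Sum>k\<le>N. x ^ k * y ^ (N - k)) = (x ^ (N + 1) - y ^ (N + 1)) / (x - y)"
  using diff_power_eq_sum[of x N y] assms by (simp add: lessThan_Suc_atMost)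

lemma convolution_power_tendsto_0:
  fixes x y :: "nat \<Rightarrow> real"
  assumes "x \<longlonglongrightarrow> l1" "\<bar>l1\<bar> < 1" and "y \<longlonglongrightarrow> l2" "\<bar>l2\<bar> < 1"
  shows "(\<lambda>N. \<Sum>k\<le>N. x N ^ k * y N ^ (N - k)) \<longlonglongrightarrow> 0"
proof -
  define m where "m = max ((1 + \<bar>l1\<bar>) / 2) ((1 + \<bar>l2\<bar>) / 2)"
  have "0 \<le> m" "m < 1"
    using assms(2,4) by (auto simp: m_def max_def)
  then have "(\<lambda>N. real N * m ^ N + m ^ N) \<longlonglongrightarrow> 0 + 0"
    by (intro tendsto_add powser_times_n_limit_0 LIMSEQ_power_zero) auto
  then have "(\<lambda>N. real N * m ^ N + m ^ N) \<longlonglongrightarrow> 0"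
    by simp
  then show ?thesis
  proof (rule tendsto_0_le[where K = 1])
    show "\<forall>\<^sub>F N in sequentially. norm (\<Sum>k\<le>N. x N ^ k * y N ^ (N - k)) \<le> norm (real N * m ^ N + m ^ N) * 1"
      using eventually_abs_le_midpoint[OF assms(1,2)] eventually_abs_le_midpoint[OF assms(3,4)]
    proof eventually_elim
      case (elim N)
      then have "\<bar>x N\<bar> \<le> m" "\<bar>y N\<bar> \<le> m"
        unfolding m_def by (blast intro: max.coboundedI1 max.coboundedI2)+
      have "\<bar>\<Sum>k\<le>N. x N ^ k * y N ^ (N - k)\<bar> \<le> (\<Sum>k\<le>N. \<bar>x N\<bar> ^ k * \<bar>y N\<bar> ^ (N - k))"
        by (rule order_trans[OF sum_abs]) (simp add: abs_mult power_abs)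
      also have "\<dots> \<le> (\<Sum>k\<le>N. m ^ k * m ^ (N - k))"
        using \<open>\<bar>x N\<bar> \<le> m\<close> \<open>\<bar>y N\<bar> \<le> m\<close> by (intro sum_mono mult_mono power_mono) auto
      also have "\<dots> = real N * m ^ N + m ^ N"
        by (simp add: algebra_simps flip: power_add)
      finally show ?case
        using \<open>0 \<le> m\<close> by simp
    qed
  qed
qed

lemma rescale_square_expansion:
  fixes n C u v X D1 D2 Y E Z G H :: real
  assumes "n \<noteq> 0" "D1 \<noteq> 0" "D2 \<noteq> 0" "E \<noteq> 0"
  shows "(n + 1) * C^2 + u^2 * (X / (D1 * D2)) + Z + 2 * C * u * (Y / E) + 2 * C * v * G + 2 * u * v * H =
        (n + 1) / n * (n * C)^2 * (1 / n) + (n * u)^2 * (X / (n * D1 * D2)) * (1 / n) + Z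
      + 2 * (n * C) * (n * u) * (Y / (n * E)) * (1 / n) + 2 * (n * C) * v * G * (1 / n)
      + 2 * (n * u) * v * H * (1 / n)"
  using assms by (simp add: field_simps power2_eq_square)

text \<open>In the application \<open>r = \<rho> T\<close> and \<open>c = 1/2 + 2\<theta>\<close>.\<close>

locale grid_asymptotics =
  fixes r c :: real
  assumes r_pos: "0 < r" and c_ge: "1/2 \<le> c"
begin

abbreviation a :: "nat \<Rightarrow> real" where
  "a \<equiv> grid_decay r"

abbreviation R1 :: "nat \<Rightarrow> real" where
  "R1 N \<equiv> char_root1 (a N) c"

abbreviation R2 :: "nat \<Rightarrow> real" where
  "R2 N \<equiv> char_root2 (a N) c"

abbreviation q :: "nat \<Rightarrow> real" where
  "q N \<equiv> omega_ratio (a N) c"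

lemma c_pos: "0 < c"
  using c_ge by simp

lemma a_pos [simp]: "0 < a N"
  by (simp add: grid_decay_def)

lemma a_lt_1: "0 < N \<Longrightarrow> a N < 1"
  using r_pos by (simp add: grid_decay_def)

lemma a_power: "0 < N \<Longrightarrow> a N ^ N = exp (- r)"
  by (simp add: grid_decay_def flip: exp_of_nat_mult)

lemma a_tendsto: "a \<longlonglongrightarrow> 1"
  unfolding grid_decay_def using r_pos by real_asymp

lemma scaled_one_minus_a_tendsto: "(\<lambda>N. real N * (1 - a N)) \<longlonglongrightarrow> r"
  unfolding grid_decay_def using r_pos by real_asymp

lemma one_lt_R1: "0 < N \<Longrightarrow> 1 < R1 N"
  using one_lt_char_root1 a_lt_1 c_ge by simp

lemma abs_R2_lt_1: "0 < N \<Longrightarrow> \<bar>R2 N\<bar> < 1"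
  using abs_char_root2_lt_1 a_lt_1 c_ge by simp

lemma R_ne_1:
  assumes "0 < N"
  shows "R1 N \<noteq> 1" "R2 N \<noteq> 1" "R1 N ^ 2 \<noteq> 1" "R2 N ^ 2 \<noteq> 1"
proof -
  have "1 < R1 N" "\<bar>R2 N\<bar> < 1"
    using one_lt_R1[OF assms] abs_R2_lt_1[OF assms] by simp_all
  then show "R1 N \<noteq> 1" "R2 N \<noteq> 1"
    by auto
  show "R1 N ^ 2 \<noteq> 1"
    using one_less_power[OF \<open>1 < R1 N\<close>, of 2] by linarith
  show "R2 N ^ 2 \<noteq> 1"
    using \<open>\<bar>R2 N\<bar> < 1\<close> abs_square_less_1[of "R2 N"] by linarith
qed

lemma char_roots_at_1: "char_root1 1 c = 1" "char_root2 1 c = (c - 1) / c"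
proof -
  have "char_disc 1 c = 1"
    by (simp add: char_disc_def char_coeff_def algebra_simps power2_eq_square)
  then show "char_root1 1 c = 1" "char_root2 1 c = (c - 1) / c"
    using c_pos by (simp_all add: char_root1_def char_root2_def char_coeff_def field_simps)
qed

lemma R1_tendsto: "R1 \<longlonglongrightarrow> 1"
proof -
  have "R1 \<longlonglongrightarrow> char_root1 1 c"
    unfolding char_root1_def char_coeff_def char_disc_def
    by (intro tendsto_intros a_tendsto) (use c_pos in auto)
  then show ?thesis
    by (simp only: char_roots_at_1)
qed

lemma R2_tendsto: "R2 \<longlonglongrightarrow> (c - 1) / c"
proof -
  have "R2 \<longlonglongrightarrow> char_root2 1 c"
    unfolding char_root2_def char_coeff_def char_disc_def
    by (intro tendsto_intros a_tendsto) (use c_pos in auto)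
  then show ?thesis
    by (simp only: char_roots_at_1)
qed

text \<open>Since \<open>char_poly (R1 N) = 0\<close>, factoring \<open>char_poly x - char_poly 1\<close> expresses
  \<open>R1 N - 1\<close> as a multiple of \<open>1 - a N\<close>.\<close>

lemma scaled_R1_tendsto: "(\<lambda>N. real N * (R1 N - 1)) \<longlonglongrightarrow> 3 * r"
proof -
  define P where "P N = (1 - a N) * (c * (1 - a N) + 1 + 2 * a N)" for N
  define den where "den N = a N * c * (R1 N + 1) - char_coeff (a N) c" for N
  have "real N * (R1 N - 1) = real N * P N / den N" if "0 < N" for N
  proof -
    have factored: "(R1 N - 1) * den N = P N"
      using char_poly_diff_at_1[of "a N" c "R1 N"] char_poly_root1[OF _ a_lt_1[OF that] c_ge]
      by (simp add: char_poly_at_1 P_def den_def algebra_simps)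
    have "0 < P N"
      unfolding P_def using a_lt_1[OF that] c_pos by (intro mult_pos_pos add_pos_pos) auto
    then have "den N \<noteq> 0"
      using factored by auto
    then show ?thesis
      unfolding factored[symmetric] by simp
  qed
  moreover have "(\<lambda>N. real N * P N / den N) \<longlonglongrightarrow> r * (c * (1 - 1) + 1 + 2 * 1) / (1 * c * (1 + 1) - (c + 1 + (c - 2) * 1^2))"
    unfolding P_def den_def char_coeff_def mult.assoc[symmetric]
    by (intro tendsto_intros scaled_one_minus_a_tendsto a_tendsto R1_tendsto) (simp add: algebra_simps)
  then have "(\<lambda>N. real N * P N / den N) \<longlonglongrightarrow> 3 * r"
    by (rule tendsto_cong_limit) (simp add: algebra_simps)
  ultimately show ?thesis
    by (rule LIMSEQ_transform_pos[of _ "\<lambda>N. real N * P N / den N"]) simp_all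
qed

lemma R1_power_tendsto: "(\<lambda>N. R1 N ^ (N + 1)) \<longlonglongrightarrow> exp (3 * r)"
proof -
  have "(\<lambda>N. R1 N ^ N) \<longlonglongrightarrow> exp (3 * r)"
  proof (rule LIMSEQ_power_exp[OF _ R1_tendsto scaled_R1_tendsto])
    show "0 < R1 N" if "0 < N" for N
      using one_lt_R1[OF that] by simp
  qed
  then have "(\<lambda>N. R1 N * R1 N ^ N) \<longlonglongrightarrow> 1 * exp (3 * r)"
    by (intro tendsto_intros R1_tendsto)
  then show ?thesis
    by simp
qed

lemma nu_K_tendsto: "(\<lambda>N. nu_K (a N) c) \<longlonglongrightarrow> 1/3"
proof -
  have "(\<lambda>N. nu_K (a N) c) \<longlonglongrightarrow> 1 / (c * (1 - 1) + 1 + 2 * 1)"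
    unfolding nu_K_def by (intro tendsto_intros a_tendsto) simp
  then show ?thesis
    by simp
qed

lemma scaled_head1_tendsto: "(\<lambda>N. head_coeff (a N) (R1 N) / real N) \<longlonglongrightarrow> 1 / (4 * r)"
proof (rule LIMSEQ_transform_pos)
  show "head_coeff (a N) (R1 N) / real N = 1 / (real N * (R1 N - 1) + real N * (1 - a N))" if "0 < N" for N
    using that by (simp add: head_coeff_def field_simps)
  have "(\<lambda>N. 1 / (real N * (R1 N - 1) + real N * (1 - a N))) \<longlonglongrightarrow> 1 / (3 * r + r)"
    using r_pos by (intro tendsto_intros scaled_R1_tendsto scaled_one_minus_a_tendsto) simp
  then show "(\<lambda>N. 1 / (real N * (R1 N - 1) + real N * (1 - a N))) \<longlonglongrightarrow> 1 / (4 * r)"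
    by simp
qed

lemma scaled_tail1_tendsto: "(\<lambda>N. tail_coeff (a N) N (R1 N) / real N) \<longlonglongrightarrow> - exp (3 * r) / (2 * r)"
proof (rule LIMSEQ_transform_pos)
  show "tail_coeff (a N) N (R1 N) / real N =
          R1 N ^ (N + 1) / (real N * (1 - a N) - a N * (real N * (R1 N - 1)))" if "0 < N" for N
    using that by (simp add: tail_coeff_def field_simps)
  have "(\<lambda>N. R1 N ^ (N + 1) / (real N * (1 - a N) - a N * (real N * (R1 N - 1))))
          \<longlonglongrightarrow> exp (3 * r) / (r - 1 * (3 * r))"
    using r_pos
    by (intro tendsto_intros R1_power_tendsto scaled_one_minus_a_tendsto a_tendsto scaled_R1_tendsto) simp
  then show "(\<lambda>N. R1 N ^ (N + 1) / (real N * (1 - a N) - a N * (real N * (R1 N - 1))))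
               \<longlonglongrightarrow> - exp (3 * r) / (2 * r)"
    by (rule tendsto_cong_limit) (simp add: field_simps)
qed

lemma head2_tendsto: "(\<lambda>N. head_coeff (a N) (R2 N)) \<longlonglongrightarrow> - c"
proof -
  have "(\<lambda>N. head_coeff (a N) (R2 N)) \<longlonglongrightarrow> 1 / ((c - 1) / c - 1)"
    unfolding head_coeff_def using c_pos by (intro tendsto_intros R2_tendsto a_tendsto) simp
  then show ?thesis
    by (rule tendsto_cong_limit) (use c_pos in \<open>simp add: field_simps\<close>)
qed

lemma q_tendsto: "q \<longlonglongrightarrow> (c - 1) / c"
proof -
  have "q \<longlonglongrightarrow> 1 * (c - 1) / c"
    unfolding omega_ratio_def by (intro tendsto_intros a_tendsto) (use c_pos in simp)
  then show ?thesis
    by simp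
qed

lemma abs_q_eq: "\<bar>q N\<bar> = a N * (\<bar>c - 1\<bar> / c)"
  using c_pos by (simp add: omega_ratio_def abs_mult abs_of_pos[OF a_pos])

lemma abs_c_ratio_le_1: "\<bar>c - 1\<bar> / c \<le> 1"
  using c_ge by (simp add: abs_if field_simps)

lemma abs_q_lt_1:
  assumes "0 < N"
  shows "\<bar>q N\<bar> < 1"
proof -
  have "\<bar>q N\<bar> \<le> a N * 1"
    unfolding abs_q_eq by (intro mult_left_mono abs_c_ratio_le_1 less_imp_le[OF a_pos])
  then show ?thesis
    using a_lt_1[OF assms] by simp
qed

lemma omega_level_tendsto: "(\<lambda>N. omega_level (a N) c) \<longlonglongrightarrow> 0"
proof -
  have "(\<lambda>N. omega_level (a N) c) \<longlonglongrightarrow> (1 - 1) / (c + 1 * (1 - c))"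
    unfolding omega_level_def by (intro tendsto_intros a_tendsto) simp
  then show ?thesis
    by simp
qed

lemma scaled_omega_level_tendsto: "(\<lambda>N. real N * omega_level (a N) c) \<longlonglongrightarrow> r"
proof -
  have "(\<lambda>N. real N * (1 - a N) / (c + a N * (1 - c))) \<longlonglongrightarrow> r / (c + 1 * (1 - c))"
    by (intro tendsto_intros scaled_one_minus_a_tendsto a_tendsto) simp
  then show ?thesis
    by (simp add: omega_level_def)
qed

lemma nu_det_over_N:
  "nu_det (a N) c N / real N = head_coeff (a N) (R1 N) / real N * tail_coeff (a N) N (R2 N)
                             - head_coeff (a N) (R2 N) * (tail_coeff (a N) N (R1 N) / real N)"
  by (simp add: nu_det_def diff_divide_distrib)

lemma scaled_alpha_eq:
  "0 < N \<Longrightarrow> real N * nu_alpha (a N) c N =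
     nu_K (a N) c * (head_coeff (a N) (R2 N) - tail_coeff (a N) N (R2 N)) / (nu_det (a N) c N / real N)"
  by (simp add: nu_alpha_def)

lemma beta_eq:
  assumes "0 < N"
  shows "nu_beta (a N) c N =
     nu_K (a N) c * (tail_coeff (a N) N (R1 N) / real N - head_coeff (a N) (R1 N) / real N)
       / (nu_det (a N) c N / real N)"
  using assms nu_det_neg[OF a_pos a_lt_1[OF assms] c_ge, of N] by (simp add: nu_beta_def field_simps)

lemma scaled_const_tendsto: "(\<lambda>N. real N * ((1 - a N) * nu_K (a N) c)) \<longlonglongrightarrow> r / 3"
proof -
  have "(\<lambda>N. real N * (1 - a N) * nu_K (a N) c) \<longlonglongrightarrow> r * (1/3)"
    by (intro tendsto_intros scaled_one_minus_a_tendsto nu_K_tendsto)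
  then show ?thesis
    by (simp add: mult.assoc)
qed

lemma nu_sum_eq:
  assumes "0 < N"
  shows "nu_sum (a N) c N =
           (real N + 1) / real N * (real N * ((1 - a N) * nu_K (a N) c))
         + real N * nu_alpha (a N) c N * ((R1 N ^ (N + 1) - 1) / (real N * (R1 N - 1)))
         + nu_beta (a N) c N * ((R2 N ^ (N + 1) - 1) / (R2 N - 1))"
proof -
  have "(\<Sum>k\<le>N. R1 N ^ k) = (R1 N ^ (N + 1) - 1) / (R1 N - 1)"
    "(\<Sum>k\<le>N. R2 N ^ k) = (R2 N ^ (N + 1) - 1) / (R2 N - 1)"
    using R_ne_1[OF assms] by (simp_all add: geometric_sum_atMost)
  moreover have "nu_sum (a N) c N = (\<Sum>k\<le>N. (1 - a N) * nu_K (a N) c)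
      + nu_alpha (a N) c N * (\<Sum>k\<le>N. R1 N ^ k) + nu_beta (a N) c N * (\<Sum>k\<le>N. R2 N ^ k)"
    by (simp add: nu_sum_def nu_sol_def sum.distrib sum_distrib_left)
  ultimately have "nu_sum (a N) c N = (\<Sum>k\<le>N. (1 - a N) * nu_K (a N) c)
      + nu_alpha (a N) c N * ((R1 N ^ (N + 1) - 1) / (R1 N - 1))
      + nu_beta (a N) c N * ((R2 N ^ (N + 1) - 1) / (R2 N - 1))"
    by simp
  also have "(\<Sum>k\<le>N. (1 - a N) * nu_K (a N) c) =
               (real N + 1) / real N * (real N * ((1 - a N) * nu_K (a N) c))"
    using assms by simp
  also have "nu_alpha (a N) c N * ((R1 N ^ (N + 1) - 1) / (R1 N - 1)) =
               real N * nu_alpha (a N) c N * ((R1 N ^ (N + 1) - 1) / (real N * (R1 N - 1)))"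
    using assms by simp
  finally show ?thesis .
qed

lemma omega_sum_eq:
  assumes "0 < N"
  shows "omega_sum (a N) c N =
           (real N + 1) / real N * (real N * omega_level (a N) c)
         + (1 / c - omega_level (a N) c) * ((q N ^ (N + 1) - 1) / (q N - 1))"
proof -
  have "q N \<noteq> 1"
    using abs_q_lt_1[OF assms] by auto
  have "omega_sum (a N) c N = (\<Sum>k\<le>N. omega_level (a N) c)
      + (1 / c - omega_level (a N) c) * (\<Sum>k\<le>N. q N ^ (N - k))"
    by (simp add: omega_sum_def omega_sol_def sum.distrib sum_distrib_left)
  also have "(\<Sum>k\<le>N. q N ^ (N - k)) = (q N ^ (N + 1) - 1) / (q N - 1)"
    using \<open>q N \<noteq> 1\<close> by (simp add: sum_atMost_reflect[of "\<lambda>k. q N ^ k"] geometric_sum_atMost)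
  also have "(\<Sum>k\<le>N. omega_level (a N) c) = (real N + 1) / real N * (real N * omega_level (a N) c)"
    using assms by simp
  finally show ?thesis .
qed

lemma omega_sq_sum_eq:
  assumes "0 < N"
  shows "omega_sq_sum (a N) c N =
           (real N + 1) / real N * (real N * omega_level (a N) c) * omega_level (a N) c
         + 2 * omega_level (a N) c * (1 / c - omega_level (a N) c) * ((q N ^ (N + 1) - 1) / (q N - 1))
         + (1 / c - omega_level (a N) c)^2 * (((q N ^ (N + 1))^2 - 1) / (q N ^ 2 - 1))"
proof -
  have "q N \<noteq> 1" "q N ^ 2 \<noteq> 1"
    using abs_q_lt_1[OF assms] abs_square_less_1[of "q N"] by auto
  have "(omega_sol (a N) c N k)^2 = omega_level (a N) c ^ 2
      + 2 * omega_level (a N) c * (1 / c - omega_level (a N) c) * q N ^ (N - k)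
      + (1 / c - omega_level (a N) c)^2 * (q N ^ 2) ^ (N - k)" for k
    by (simp add: omega_sol_def power2_eq_square algebra_simps)
  then have "omega_sq_sum (a N) c N = (\<Sum>k\<le>N. omega_level (a N) c ^ 2)
      + 2 * omega_level (a N) c * (1 / c - omega_level (a N) c) * (\<Sum>k\<le>N. q N ^ (N - k))
      + (1 / c - omega_level (a N) c)^2 * (\<Sum>k\<le>N. (q N ^ 2) ^ (N - k))"
    by (simp add: omega_sq_sum_def sum.distrib sum_distrib_left)
  also have "(\<Sum>k\<le>N. q N ^ (N - k)) = (q N ^ (N + 1) - 1) / (q N - 1)"
    using \<open>q N \<noteq> 1\<close> by (simp add: sum_atMost_reflect[of "\<lambda>k. q N ^ k"] geometric_sum_atMost)
  also have "(\<Sum>k\<le>N. (q N ^ 2) ^ (N - k)) = ((q N ^ 2) ^ (N + 1) - 1) / (q N ^ 2 - 1)"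
    using \<open>q N ^ 2 \<noteq> 1\<close> by (simp add: sum_atMost_reflect[of "\<lambda>k. (q N ^ 2) ^ k"] geometric_sum_atMost)
  also have "(q N ^ 2) ^ (N + 1) = (q N ^ (N + 1))^2"
    by (metis power_mult mult.commute)
  also have "(\<Sum>k\<le>N. omega_level (a N) c ^ 2) =
               (real N + 1) / real N * (real N * omega_level (a N) c) * omega_level (a N) c"
    using assms by (simp add: power2_eq_square)
  finally show ?thesis .
qed

lemma nu_omega_sum_eq:
  assumes "0 < N"
  shows "nu_omega_sum (a N) c N = omega_level (a N) c * nu_sum (a N) c N
      + (1 / c - omega_level (a N) c) * ((1 - a N) * nu_K (a N) c * ((q N ^ (N + 1) - 1) / (q N - 1))
         + nu_alpha (a N) c N * ((R1 N ^ (N + 1) - q N ^ (N + 1)) / (R1 N - q N))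
         + nu_beta (a N) c N * (\<Sum>k\<le>N. R2 N ^ k * q N ^ (N - k)))"
proof -
  have "q N \<noteq> 1" "R1 N \<noteq> q N"
    using abs_q_lt_1[OF assms] one_lt_R1[OF assms] by auto
  have "nu_sol (a N) c N k * omega_sol (a N) c N k = omega_level (a N) c * nu_sol (a N) c N k
      + (1 / c - omega_level (a N) c) * ((1 - a N) * nu_K (a N) c * q N ^ (N - k)
         + nu_alpha (a N) c N * (R1 N ^ k * q N ^ (N - k)) + nu_beta (a N) c N * (R2 N ^ k * q N ^ (N - k)))" for k
    by (simp add: nu_sol_def omega_sol_def algebra_simps)
  then have "nu_omega_sum (a N) c N = omega_level (a N) c * nu_sum (a N) c N
      + (1 / c - omega_level (a N) c) * ((1 - a N) * nu_K (a N) c * (\<Sum>k\<le>N. q N ^ (N - k))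
         + nu_alpha (a N) c N * (\<Sum>k\<le>N. R1 N ^ k * q N ^ (N - k))
         + nu_beta (a N) c N * (\<Sum>k\<le>N. R2 N ^ k * q N ^ (N - k)))"
    by (simp add: nu_omega_sum_def nu_sum_def sum.distrib flip: sum_distrib_left)
  also have "(\<Sum>k\<le>N. q N ^ (N - k)) = (q N ^ (N + 1) - 1) / (q N - 1)"
    using \<open>q N \<noteq> 1\<close> by (simp add: sum_atMost_reflect[of "\<lambda>k. q N ^ k"] geometric_sum_atMost)
  also have "(\<Sum>k\<le>N. R1 N ^ k * q N ^ (N - k)) = (R1 N ^ (N + 1) - q N ^ (N + 1)) / (R1 N - q N)"
    using \<open>R1 N \<noteq> q N\<close> by (rule sum_power_mult_power_diff)
  finally show ?thesis .
qed

end

definition nu_sum_limit :: "real \<Rightarrow> real \<Rightarrow> real" where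
  "nu_sum_limit r l = r / 3 + (4 * (1 + l) * (exp (3 * r) - 1) + 3 * (2 * exp (3 * r) + 1) * (1 - l))
                               / (9 * (2 * exp (3 * r) - l))"

lemma nu_sum_limit_pos:
  assumes "0 < r" "\<bar>l\<bar> \<le> 1"
  shows "0 < nu_sum_limit r l"
proof -
  have "1 < exp (3 * r)"
    using assms(1) by simp
  moreover have "0 \<le> 1 + l" "0 \<le> 1 - l"
    using assms(2) by (simp_all add: abs_le_iff)
  ultimately have "l < 2 * exp (3 * r)"
    by linarith
  with \<open>1 < exp (3 * r)\<close> \<open>0 \<le> 1 + l\<close> \<open>0 \<le> 1 - l\<close> have "0 \<le> 4 * (1 + l) * (exp (3 * r) - 1) + 3 * (2 * exp (3 * r) + 1) * (1 - l)"
    and "0 < 9 * (2 * exp (3 * r) - l)"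
    by simp_all
  with assms(1) show ?thesis
    unfolding nu_sum_limit_def by (simp add: add_pos_nonneg)
qed

lemma nu_sum_limit_0: "nu_sum_limit r 0 = (2 * exp (3 * r) * (3 * r + 5) - 1) / (18 * exp (3 * r))"
  by (simp add: nu_sum_limit_def field_simps)

lemma nu_sum_limit_parity:
  assumes "2 * exp (3 * r)^2 \<noteq> s"
  shows "nu_sum_limit r (s / exp (3 * r)) =
    (3 * r * (2 * exp (3 * r)^2 - s) + 4 * (exp (3 * r) + s) * (exp (3 * r) - 1)
      + 3 * (2 * exp (3 * r) + 1) * (exp (3 * r) - s)) / (9 * (2 * exp (3 * r)^2 - s))"
proof -
  have "2 * exp (3 * r) - s / exp (3 * r) = (2 * exp (3 * r)^2 - s) / exp (3 * r)"
    by (simp add: field_simps power2_eq_square)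
  with assms show ?thesis
    unfolding nu_sum_limit_def by (simp add: field_simps power2_eq_square)
qed

text \<open>The limits of \<open>\<Sum> \<nu>\<close> and \<open>\<Sum> \<omega>\<close> along a subsequence only depend on the limits of
  \<open>R2 N ^ (N + 1)\<close> and \<open>q N ^ (N + 1)\<close>, which vanish for \<open>\<theta> > 0\<close> but oscillate with
  the parity of \<open>N\<close> for \<open>\<theta> = 0\<close>.\<close>

locale grid_subsequence = grid_asymptotics +
  fixes \<sigma> :: "nat \<Rightarrow> nat" and l lq :: real
  assumes subseq: "strict_mono \<sigma>"
    and R2_power_tendsto: "(\<lambda>N. char_root2 (grid_decay r (\<sigma> N)) c ^ (\<sigma> N + 1)) \<longlonglongrightarrow> l"
    and q_power_tendsto: "(\<lambda>N. omega_ratio (grid_decay r (\<sigma> N)) c ^ (\<sigma> N + 1)) \<longlonglongrightarrow> lq"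
begin

lemma subseq_tendsto: "f \<longlonglongrightarrow> L \<Longrightarrow> (\<lambda>N. f (\<sigma> N)) \<longlonglongrightarrow> L"
  using LIMSEQ_subseq_LIMSEQ[OF _ subseq] by (simp add: comp_def)

lemma subseq_tendsto_transform:
  fixes f g :: "nat \<Rightarrow> real"
  assumes "\<And>M. 0 < M \<Longrightarrow> f M = g M" and "(\<lambda>N. g (\<sigma> N)) \<longlonglongrightarrow> L"
  shows "(\<lambda>N. f (\<sigma> N)) \<longlonglongrightarrow> L"
proof (rule LIMSEQ_transform_pos[where g = "\<lambda>N. g (\<sigma> N)"])
  show "f (\<sigma> N) = g (\<sigma> N)" if "0 < N" for N
    using seq_suble[OF subseq, of N] that by (intro assms(1)) simp
qed (rule assms(2))

lemma abs_l_le_1: "\<bar>l\<bar> \<le> 1"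
proof (rule Lim_bounded[where M = 1])
  show "(\<lambda>N. \<bar>R2 (\<sigma> N) ^ (\<sigma> N + 1)\<bar>) \<longlonglongrightarrow> \<bar>l\<bar>"
    by (intro tendsto_intros R2_power_tendsto)
  show "\<forall>N\<ge>1. \<bar>R2 (\<sigma> N) ^ (\<sigma> N + 1)\<bar> \<le> 1"
  proof (intro allI impI)
    fix N :: nat
    assume "1 \<le> N"
    then have "0 < \<sigma> N"
      using seq_suble[OF subseq, of N] by simp
    then have "\<bar>R2 (\<sigma> N)\<bar> \<le> 1"
      using abs_R2_lt_1 by (simp add: less_imp_le)
    then show "\<bar>R2 (\<sigma> N) ^ (\<sigma> N + 1)\<bar> \<le> 1"
      unfolding power_abs by (intro power_le_one) simp_all
  qed
qed

lemma l_lt_2_exp: "l < 2 * exp (3 * r)"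
proof -
  have "1 < exp (3 * r)"
    using r_pos by simp
  then show ?thesis
    using abs_l_le_1 by linarith
qed

lemma tail2_tendsto: "(\<lambda>N. tail_coeff (a (\<sigma> N)) (\<sigma> N) (R2 (\<sigma> N))) \<longlonglongrightarrow> c * l"
proof -
  have "(\<lambda>N. R2 (\<sigma> N) ^ (\<sigma> N + 1) / (1 - a (\<sigma> N) * R2 (\<sigma> N))) \<longlonglongrightarrow> l / (1 - 1 * ((c - 1) / c))"
    using c_pos by (intro tendsto_intros R2_power_tendsto subseq_tendsto[OF a_tendsto] subseq_tendsto[OF R2_tendsto]) simp
  then show ?thesis
    unfolding tail_coeff_def by (rule tendsto_cong_limit) (use c_pos in \<open>simp add: field_simps\<close>)
qed

lemma scaled_det_tendsto:
  "(\<lambda>N. nu_det (a (\<sigma> N)) c (\<sigma> N) / real (\<sigma> N)) \<longlonglongrightarrow> c * (l - 2 * exp (3 * r)) / (4 * r)"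
proof -
  have "(\<lambda>N. head_coeff (a (\<sigma> N)) (R1 (\<sigma> N)) / real (\<sigma> N) * tail_coeff (a (\<sigma> N)) (\<sigma> N) (R2 (\<sigma> N))
             - head_coeff (a (\<sigma> N)) (R2 (\<sigma> N)) * (tail_coeff (a (\<sigma> N)) (\<sigma> N) (R1 (\<sigma> N)) / real (\<sigma> N)))
          \<longlonglongrightarrow> 1 / (4 * r) * (c * l) - (- c) * (- exp (3 * r) / (2 * r))"
    by (intro tendsto_intros subseq_tendsto[OF scaled_head1_tendsto] subseq_tendsto[OF head2_tendsto]
        subseq_tendsto[OF scaled_tail1_tendsto] tail2_tendsto)
  then show ?thesis
    unfolding nu_det_over_N by (rule tendsto_cong_limit) (use r_pos in \<open>simp add: field_simps\<close>)
qed

lemma scaled_alpha_tendsto: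
  "(\<lambda>N. real (\<sigma> N) * nu_alpha (a (\<sigma> N)) c (\<sigma> N)) \<longlonglongrightarrow> 4 * r * (1 + l) / (3 * (2 * exp (3 * r) - l))"
proof -
  have det: "c * (l - 2 * exp (3 * r)) / (4 * r) \<noteq> 0"
    using l_lt_2_exp c_pos r_pos by simp
  have limit_value: "4 * r * (1 + l) / (3 * (2 * exp (3 * r) - l)) =
      1/3 * (- c - c * l) / (c * (l - 2 * exp (3 * r)) / (4 * r))"
    using l_lt_2_exp c_pos r_pos by (simp add: field_simps)
  show ?thesis
    unfolding limit_value by (rule subseq_tendsto_transform[OF scaled_alpha_eq], assumption)
      (intro tendsto_intros subseq_tendsto[OF nu_K_tendsto] subseq_tendsto[OF head2_tendsto] tail2_tendsto scaled_det_tendsto det)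
qed

lemma beta_tendsto:
  "(\<lambda>N. nu_beta (a (\<sigma> N)) c (\<sigma> N)) \<longlonglongrightarrow> (2 * exp (3 * r) + 1) / (3 * c * (2 * exp (3 * r) - l))"
proof -
  have det: "c * (l - 2 * exp (3 * r)) / (4 * r) \<noteq> 0"
    using l_lt_2_exp c_pos r_pos by simp
  have limit_value: "(2 * exp (3 * r) + 1) / (3 * c * (2 * exp (3 * r) - l)) =
      1/3 * (- exp (3 * r) / (2 * r) - 1 / (4 * r)) / (c * (l - 2 * exp (3 * r)) / (4 * r))"
    using l_lt_2_exp c_pos r_pos by (simp add: field_simps)
  show ?thesis
    unfolding limit_value by (rule subseq_tendsto_transform[OF beta_eq], assumption)
      (intro tendsto_intros subseq_tendsto[OF nu_K_tendsto] subseq_tendsto[OF scaled_tail1_tendsto]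
        subseq_tendsto[OF scaled_head1_tendsto] scaled_det_tendsto det)
qed

lemma nu_sum_limit_eq:
  "nu_sum_limit r l = 1 * (r / 3)
     + 4 * r * (1 + l) / (3 * (2 * exp (3 * r) - l)) * ((exp (3 * r) - 1) / (3 * r))
     + (2 * exp (3 * r) + 1) / (3 * c * (2 * exp (3 * r) - l)) * ((l - 1) / ((c - 1) / c - 1))"
proof -
  have ratio: "(l - 1) / ((c - 1) / c - 1) = c * (1 - l)"
    using c_pos by (simp add: field_simps)
  have "r / 3 + (4 * (1 + l) * (exp (3 * r) - 1) + 3 * (2 * exp (3 * r) + 1) * (1 - l)) / (9 * D)
      = 1 * (r / 3) + 4 * r * (1 + l) / (3 * D) * ((exp (3 * r) - 1) / (3 * r))
        + (2 * exp (3 * r) + 1) / (3 * c * D) * (c * (1 - l))" if "D \<noteq> 0" for D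
    using that c_pos r_pos by (simp add: field_simps)
  moreover have "2 * exp (3 * r) - l \<noteq> 0"
    using l_lt_2_exp by simp
  ultimately show ?thesis
    unfolding nu_sum_limit_def ratio by blast
qed

lemma nu_sum_tendsto: "(\<lambda>N. nu_sum (a (\<sigma> N)) c (\<sigma> N)) \<longlonglongrightarrow> nu_sum_limit r l"
proof -
  have sum1: "(\<lambda>N. (R1 N ^ (N + 1) - 1) / (real N * (R1 N - 1))) \<longlonglongrightarrow> (exp (3 * r) - 1) / (3 * r)"
    using r_pos by (intro tendsto_intros R1_power_tendsto scaled_R1_tendsto) simp
  have sum2: "(\<lambda>N. (R2 (\<sigma> N) ^ (\<sigma> N + 1) - 1) / (R2 (\<sigma> N) - 1)) \<longlonglongrightarrow> (l - 1) / ((c - 1) / c - 1)"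
    using c_pos by (intro tendsto_intros R2_power_tendsto subseq_tendsto[OF R2_tendsto]) simp
  show ?thesis
    unfolding nu_sum_limit_eq
    by (rule subseq_tendsto_transform[OF nu_sum_eq], assumption)
      (intro tendsto_add tendsto_mult subseq_tendsto[OF Suc_over_n_tendsto] subseq_tendsto[OF scaled_const_tendsto]
        subseq_tendsto[OF sum1] sum2 scaled_alpha_tendsto beta_tendsto)
qed

lemma omega_sum_tendsto: "(\<lambda>N. omega_sum (a (\<sigma> N)) c (\<sigma> N)) \<longlonglongrightarrow> r + 1 - lq"
proof -
  have ratio: "(c - 1) / c - 1 \<noteq> 0"
    using c_pos by (simp add: field_simps)
  have limit_value: "r + 1 - lq = 1 * r + (1 / c - 0) * ((lq - 1) / ((c - 1) / c - 1))"
    using c_pos by (simp add: field_simps)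
  show ?thesis
    unfolding limit_value by (rule subseq_tendsto_transform[OF omega_sum_eq], assumption)
      (intro tendsto_intros subseq_tendsto[OF Suc_over_n_tendsto] subseq_tendsto[OF scaled_omega_level_tendsto]
        subseq_tendsto[OF omega_level_tendsto] q_power_tendsto subseq_tendsto[OF q_tendsto] ratio)
qed

end

locale grid_asymptotics_pos = grid_asymptotics +
  assumes c_gt: "1/2 < c"
begin

lemma abs_c_ratio_lt_1: "\<bar>(c - 1) / c\<bar> < 1"
  using c_gt by (simp add: abs_if field_simps)

lemma R2_power_tendsto_0: "(\<lambda>N. R2 N ^ (N + 1)) \<longlonglongrightarrow> 0"
  by (rule LIMSEQ_power_Suc_zero[OF R2_tendsto abs_c_ratio_lt_1])

lemma q_power_tendsto_0: "(\<lambda>N. q N ^ (N + 1)) \<longlonglongrightarrow> 0"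
  by (rule LIMSEQ_power_Suc_zero[OF q_tendsto abs_c_ratio_lt_1])

end

sublocale grid_asymptotics_pos \<subseteq> grid_subsequence r c "\<lambda>N. N" 0 0
proof unfold_locales
  show "strict_mono (\<lambda>N::nat. N)"
    by (simp add: strict_mono_def)
qed (fact R2_power_tendsto_0 q_power_tendsto_0)+

context grid_asymptotics_pos
begin

lemma nu_sq_sum_eq:
  assumes "0 < N"
  shows "nu_sq_sum (a N) c N =
      (real N + 1) * ((1 - a N) * nu_K (a N) c)^2
    + nu_alpha (a N) c N ^ 2 * (((R1 N ^ (N + 1))^2 - 1) / ((R1 N - 1) * (R1 N + 1)))
    + nu_beta (a N) c N ^ 2 * (((R2 N ^ (N + 1))^2 - 1) / (R2 N ^ 2 - 1))
    + 2 * ((1 - a N) * nu_K (a N) c) * nu_alpha (a N) c N * ((R1 N ^ (N + 1) - 1) / (R1 N - 1))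
    + 2 * ((1 - a N) * nu_K (a N) c) * nu_beta (a N) c N * ((R2 N ^ (N + 1) - 1) / (R2 N - 1))
    + 2 * nu_alpha (a N) c N * nu_beta (a N) c N * ((((c - 1) / c) ^ (N + 1) - 1) / ((c - 1) / c - 1))"
proof -
  note ne = R_ne_1[OF assms]
  have "(c - 1) / c \<noteq> 1"
    using c_pos by (simp add: field_simps)
  have "nu_sq_sum (a N) c N =
      (real N + 1) * ((1 - a N) * nu_K (a N) c)^2 + nu_alpha (a N) c N ^ 2 * (\<Sum>k\<le>N. (R1 N ^ 2) ^ k)
    + nu_beta (a N) c N ^ 2 * (\<Sum>k\<le>N. (R2 N ^ 2) ^ k)
    + 2 * ((1 - a N) * nu_K (a N) c) * nu_alpha (a N) c N * (\<Sum>k\<le>N. R1 N ^ k)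
    + 2 * ((1 - a N) * nu_K (a N) c) * nu_beta (a N) c N * (\<Sum>k\<le>N. R2 N ^ k)
    + 2 * nu_alpha (a N) c N * nu_beta (a N) c N * (\<Sum>k\<le>N. (R1 N * R2 N) ^ k)"
    unfolding nu_sq_sum_def nu_sol_def by (rule sum_square_expand)
  also have "R1 N * R2 N = (c - 1) / c"
    using char_root_mult[OF a_pos a_lt_1[OF assms] c_ge] .
  also have "(\<Sum>k\<le>N. (R1 N ^ 2) ^ k) = ((R1 N ^ 2) ^ (N + 1) - 1) / (R1 N ^ 2 - 1)"
    by (rule geometric_sum_atMost[OF ne(3)])
  also have "(\<Sum>k\<le>N. (R2 N ^ 2) ^ k) = ((R2 N ^ 2) ^ (N + 1) - 1) / (R2 N ^ 2 - 1)"
    by (rule geometric_sum_atMost[OF ne(4)])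
  also have "(R1 N ^ 2) ^ (N + 1) = (R1 N ^ (N + 1))^2"
    by (metis power_mult mult.commute)
  also have "(R2 N ^ 2) ^ (N + 1) = (R2 N ^ (N + 1))^2"
    by (metis power_mult mult.commute)
  also have "R1 N ^ 2 - 1 = (R1 N - 1) * (R1 N + 1)"
    by (simp add: algebra_simps power2_eq_square)
  also have "(\<Sum>k\<le>N. R1 N ^ k) = (R1 N ^ (N + 1) - 1) / (R1 N - 1)"
    using ne by (simp add: geometric_sum_atMost)
  also have "(\<Sum>k\<le>N. R2 N ^ k) = (R2 N ^ (N + 1) - 1) / (R2 N - 1)"
    using ne by (simp add: geometric_sum_atMost)
  also have "(\<Sum>k\<le>N. ((c - 1) / c) ^ k) = (((c - 1) / c) ^ (N + 1) - 1) / ((c - 1) / c - 1)"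
    using \<open>(c - 1) / c \<noteq> 1\<close> by (rule geometric_sum_atMost)
  finally show ?thesis .
qed

text \<open>Apart from the \<open>\<beta>\<close>-part, every term of \<open>\<Sum> \<nu>\<^sup>2\<close> is \<open>O(1/N)\<close>: scaled as below, each
  factor converges and a factor \<open>1 / N\<close> is left over.\<close>

lemma nu_sq_sum_tendsto:
  "(\<lambda>N. nu_sq_sum (a N) c N) \<longlonglongrightarrow> (2 * exp (3 * r) + 1)^2 / (36 * exp (3 * r)^2 * (2 * c - 1))"
proof -
  define K where "K N = real N * ((1 - a N) * nu_K (a N) c)" for N
  define A where "A N = real N * nu_alpha (a N) c N" for N
  define B where "B N = nu_beta (a N) c N" for N
  define S where "S N =
      (real N + 1) / real N * K N ^ 2 * (1 / real N)
    + A N ^ 2 * (((R1 N ^ (N + 1))^2 - 1) / (real N * (R1 N - 1) * (R1 N + 1))) * (1 / real N)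
    + B N ^ 2 * (((R2 N ^ (N + 1))^2 - 1) / (R2 N ^ 2 - 1))
    + 2 * K N * A N * ((R1 N ^ (N + 1) - 1) / (real N * (R1 N - 1))) * (1 / real N)
    + 2 * K N * B N * ((R2 N ^ (N + 1) - 1) / (R2 N - 1)) * (1 / real N)
    + 2 * A N * B N * ((((c - 1) / c) ^ (N + 1) - 1) / ((c - 1) / c - 1)) * (1 / real N)" for N
  have eq: "nu_sq_sum (a N) c N = S N" if "0 < N" for N
  proof -
    have "1 < R1 N"
      using one_lt_R1[OF that] .
    then have ne: "real N \<noteq> 0" "R1 N - 1 \<noteq> 0" "R1 N + 1 \<noteq> 0"
      using that by simp_all
    show ?thesis
      unfolding nu_sq_sum_eq[OF that] S_def K_def A_def B_def by (rule rescale_square_expansion[OF ne ne(2)])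
  qed
  have "S \<longlonglongrightarrow> 1 * (r / 3)^2 * 0
      + (4 * r * (1 + 0) / (3 * (2 * exp (3 * r) - 0)))^2 * ((exp (3 * r)^2 - 1) / (3 * r * (1 + 1))) * 0
      + ((2 * exp (3 * r) + 1) / (3 * c * (2 * exp (3 * r) - 0)))^2 * ((0^2 - 1) / (((c - 1) / c)^2 - 1))
      + 2 * (r / 3) * (4 * r * (1 + 0) / (3 * (2 * exp (3 * r) - 0))) * ((exp (3 * r) - 1) / (3 * r)) * 0
      + 2 * (r / 3) * ((2 * exp (3 * r) + 1) / (3 * c * (2 * exp (3 * r) - 0))) * ((0 - 1) / ((c - 1) / c - 1)) * 0
      + 2 * (4 * r * (1 + 0) / (3 * (2 * exp (3 * r) - 0))) * ((2 * exp (3 * r) + 1) / (3 * c * (2 * exp (3 * r) - 0)))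
          * ((0 - 1) / ((c - 1) / c - 1)) * 0"
    unfolding S_def K_def A_def B_def
    using r_pos c_pos abs_c_ratio_lt_1
    by (intro tendsto_intros lim_const_over_n Suc_over_n_tendsto scaled_const_tendsto scaled_alpha_tendsto
        beta_tendsto R1_power_tendsto scaled_R1_tendsto R1_tendsto R2_power_tendsto_0 R2_tendsto
        LIMSEQ_power_Suc_zero[OF tendsto_const abs_c_ratio_lt_1])
      (auto simp: power2_eq_square field_simps abs_if split: if_splits)
  then have "S \<longlonglongrightarrow> (2 * exp (3 * r) + 1)^2 / (36 * exp (3 * r)^2 * (2 * c - 1))"
    by (rule tendsto_cong_limit) (use c_gt in \<open>simp add: field_simps power2_eq_square\<close>)
  then show ?thesis
    by (rule LIMSEQ_transform_pos[rotated]) (rule eq)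
qed

lemma omega_sq_sum_tendsto: "(\<lambda>N. omega_sq_sum (a N) c N) \<longlonglongrightarrow> 1 / (2 * c - 1)"
proof -
  have lim: "(\<lambda>N. (real N + 1) / real N * (real N * omega_level (a N) c) * omega_level (a N) c
         + 2 * omega_level (a N) c * (1 / c - omega_level (a N) c) * ((q N ^ (N + 1) - 1) / (q N - 1))
         + (1 / c - omega_level (a N) c)^2 * (((q N ^ (N + 1))^2 - 1) / (q N ^ 2 - 1)))
      \<longlonglongrightarrow> 1 * r * 0 + 2 * 0 * (1 / c - 0) * ((0 - 1) / ((c - 1) / c - 1))
         + (1 / c - 0)^2 * ((0^2 - 1) / (((c - 1) / c)^2 - 1))"
    using c_pos abs_c_ratio_lt_1
    by (intro tendsto_intros Suc_over_n_tendsto scaled_omega_level_tendsto omega_level_tendsto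
        q_power_tendsto_0 q_tendsto)
      (auto simp: power2_eq_square field_simps abs_if split: if_splits)
  have limit_value: "1 / (2 * c - 1) = 1 * r * 0 + 2 * 0 * (1 / c - 0) * ((0 - 1) / ((c - 1) / c - 1))
         + (1 / c - 0)^2 * ((0^2 - 1) / (((c - 1) / c)^2 - 1))"
    using c_gt by (simp add: field_simps power2_eq_square)
  show ?thesis
    unfolding limit_value by (rule LIMSEQ_transform_pos[OF omega_sq_sum_eq lim])
qed

lemma nu_omega_sum_tendsto: "(\<lambda>N. nu_omega_sum (a N) c N) \<longlonglongrightarrow> 0"
proof -
  define S where "S N = omega_level (a N) c * nu_sum (a N) c N
      + (1 / c - omega_level (a N) c) * (real N * ((1 - a N) * nu_K (a N) c) * ((q N ^ (N + 1) - 1) / (q N - 1)) * (1 / real N)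
         + real N * nu_alpha (a N) c N * ((R1 N ^ (N + 1) - q N ^ (N + 1)) / (R1 N - q N)) * (1 / real N)
         + nu_beta (a N) c N * (\<Sum>k\<le>N. R2 N ^ k * q N ^ (N - k)))" for N
  have eq: "nu_omega_sum (a N) c N = S N" if "0 < N" for N
    using that unfolding nu_omega_sum_eq[OF that] S_def by simp
  have "S \<longlonglongrightarrow> 0 * nu_sum_limit r 0
      + (1 / c - 0) * (r / 3 * ((0 - 1) / ((c - 1) / c - 1)) * 0
         + 4 * r * (1 + 0) / (3 * (2 * exp (3 * r) - 0)) * ((exp (3 * r) - 0) / (1 - (c - 1) / c)) * 0
         + (2 * exp (3 * r) + 1) / (3 * c * (2 * exp (3 * r) - 0)) * 0)"
    unfolding S_def using c_pos abs_c_ratio_lt_1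
    by (intro tendsto_intros omega_level_tendsto nu_sum_tendsto scaled_const_tendsto q_power_tendsto_0
        q_tendsto lim_const_over_n scaled_alpha_tendsto R1_power_tendsto R1_tendsto beta_tendsto
        convolution_power_tendsto_0[OF R2_tendsto _ q_tendsto])
      (auto simp: field_simps abs_if split: if_splits)
  then have "S \<longlonglongrightarrow> 0"
    by simp
  then show ?thesis
    by (rule LIMSEQ_transform_pos[of _ S, rotated]) (rule eq)
qed

end

lemma minus_one_power_parity: "(-1::real) ^ (2 * N + p + 1) = (-1) ^ (p + 1)"
  by (simp add: power_add power_mult)

context grid_asymptotics
begin

lemma R2_power_parity_tendsto:
  assumes "c = 1/2"
  shows "(\<lambda>N. R2 (2 * N + p) ^ (2 * N + p + 1)) \<longlonglongrightarrow> (-1) ^ (p + 1) / exp (3 * r)"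
proof -
  have "strict_mono (\<lambda>N::nat. 2 * N + p)"
    by (rule strict_monoI) simp
  then have "(\<lambda>N. R1 (2 * N + p) ^ (2 * N + p + 1)) \<longlonglongrightarrow> exp (3 * r)"
    using LIMSEQ_subseq_LIMSEQ[OF R1_power_tendsto] by (simp add: comp_def)
  then have "(\<lambda>N. (-1) ^ (p + 1) / R1 (2 * N + p) ^ (2 * N + p + 1)) \<longlonglongrightarrow> (-1) ^ (p + 1) / exp (3 * r)"
    by (intro tendsto_intros) simp_all
  moreover have "R2 (2 * N + p) ^ (2 * N + p + 1) = (-1) ^ (p + 1) / R1 (2 * N + p) ^ (2 * N + p + 1)"
    if "0 < N" for N
  proof -
    define M where "M = 2 * N + p"
    have "0 < M"
      using that by (simp add: M_def)
    then have "R2 M = - 1 / R1 M"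
      using char_root_mult[OF a_pos a_lt_1[OF \<open>0 < M\<close>] c_ge] one_lt_R1[OF \<open>0 < M\<close>]
      unfolding assms by (simp add: field_simps)
    then have "R2 M ^ (M + 1) = (-1) ^ (M + 1) / R1 M ^ (M + 1)"
      by (simp only: power_divide)
    then show ?thesis
      unfolding M_def minus_one_power_parity .
  qed
  ultimately show ?thesis
    by (rule LIMSEQ_transform_pos[rotated])
qed

lemma q_power_parity_tendsto:
  assumes "c = 1/2"
  shows "(\<lambda>N. q (2 * N + p) ^ (2 * N + p + 1)) \<longlonglongrightarrow> (-1) ^ (p + 1) * exp (- r)"
proof -
  have "strict_mono (\<lambda>N::nat. 2 * N + p)"
    by (rule strict_monoI) simp
  then have "(\<lambda>N. (-1) ^ (p + 1) * a (2 * N + p) * exp (- r)) \<longlonglongrightarrow> (-1) ^ (p + 1) * 1 * exp (- r)"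
    using LIMSEQ_subseq_LIMSEQ[OF a_tendsto] by (intro tendsto_intros) (simp add: comp_def)
  then have "(\<lambda>N. (-1) ^ (p + 1) * a (2 * N + p) * exp (- r)) \<longlonglongrightarrow> (-1) ^ (p + 1) * exp (- r)"
    by simp
  moreover have "q (2 * N + p) ^ (2 * N + p + 1) = (-1) ^ (p + 1) * a (2 * N + p) * exp (- r)"
    if "0 < N" for N
  proof -
    define M where "M = 2 * N + p"
    have "0 < M"
      using that by (simp add: M_def)
    have "q M = - a M"
      unfolding assms by (simp add: omega_ratio_def)
    then have "q M ^ (M + 1) = (-1) ^ (M + 1) * a M * a M ^ M"
      by (simp add: power_minus[of "a M"])
    then have "q M ^ (M + 1) = (-1) ^ (M + 1) * a M * exp (- r)"
      unfolding a_power[OF \<open>0 < M\<close>] .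
    then show ?thesis
      unfolding M_def minus_one_power_parity .
  qed
  ultimately show ?thesis
    by (rule LIMSEQ_transform_pos[rotated])
qed

end

section \<open>The limits of the equilibrium cost\<close>

lemma exp_6: "exp (6 * x) = exp (3 * x :: real)^2"
  by (simp add: power2_eq_square flip: exp_add)

lemma pos_theta_limit_eq:
  fixes r \<theta> x y :: real
  assumes "0 < r" "0 < \<theta>"
  defines "E \<equiv> exp (3 * r)"
  shows "((x + y) / 2)^2 * (2 / (3 * nu_sum_limit r 0)
           - \<theta> / 3 * ((2 * E + 1)^2 / (36 * E^2 * (2 * (1/2 + 2 * \<theta>) - 1)) / nu_sum_limit r 0 ^ 2))
       + ((x + y) / 2) * ((x - y) / 2) * (2 / (r + 1 - 0) - 2 * \<theta> * (0 / (nu_sum_limit r 0 * (r + 1 - 0))))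
       + ((x - y) / 2)^2 * \<theta> * (1 / (2 * (1/2 + 2 * \<theta>) - 1) / (r + 1 - 0)^2)
     = (x + y)^2 * (36 * E^2 * (8 * r + 13) - 60 * E - 3) / (16 * (2 * E * (3 * r + 5) - 1)^2)
       + (x^2 - y^2) / (2 * (r + 1)) + (x - y)^2 / (16 * (r + 1)^2)"
proof -
  define G where "G = 2 * E * (3 * r + 5) - 1"
  have "1 < E"
    using assms(1) by (simp add: E_def)
  then have "1 * 5 < E * (3 * r + 5)"
    using assms(1) by (intro mult_strict_mono) auto
  then have "0 < G"
    unfolding G_def by linarith
  have limit: "nu_sum_limit r 0 = G / (18 * E)"
    unfolding nu_sum_limit_0 G_def E_def ..
  have "2 / (3 * (G / (18 * E))) - \<theta> / 3 * ((2 * E + 1)^2 / (36 * E^2 * (4 * \<theta>)) / (G / (18 * E))^2)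
          = (48 * E * G - 3 * (2 * E + 1)^2) / (4 * G^2)"
    using \<open>0 < G\<close> \<open>1 < E\<close> assms(2) by (simp add: field_simps power2_eq_square)
  also have "48 * E * G - 3 * (2 * E + 1)^2 = 36 * E^2 * (8 * r + 13) - 60 * E - 3"
    unfolding G_def by (simp add: algebra_simps power2_eq_square)
  finally have nu_part: "((x + y) / 2)^2 * (2 / (3 * (G / (18 * E)))
      - \<theta> / 3 * ((2 * E + 1)^2 / (36 * E^2 * (4 * \<theta>)) / (G / (18 * E))^2))
      = (x + y)^2 * (36 * E^2 * (8 * r + 13) - 60 * E - 3) / (16 * G^2)"
    by (simp add: power_divide)
  have omega_parts: "((x + y) / 2) * ((x - y) / 2) * (2 / R) = (x^2 - y^2) / (2 * R)"
    "((x - y) / 2)^2 * \<theta> * (1 / (4 * \<theta>) / R^2) = (x - y)^2 / (16 * R^2)" if "R \<noteq> 0" for R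
    using that assms(2) by (simp_all add: field_simps power2_eq_square)
  have "2 * (1/2 + 2 * \<theta>) - 1 = 4 * \<theta>" and r1: "r + 1 \<noteq> 0"
    using assms(1) by simp_all
  then show ?thesis
    unfolding limit G_def[symmetric] diff_zero div_0 mult_zero_right
    by (simp only: nu_part omega_parts[OF r1])
qed

lemma eq_cost_tendsto_pos_theta:
  fixes \<rho> T \<theta> s0 x y :: real
  assumes "0 < \<rho>" "0 < T" "0 < \<theta>"
  shows "(\<lambda>N. eq_cost \<rho> T \<theta> s0 x y N) \<longlonglongrightarrow>
             (x + y)^2 * (36 * exp (6 * \<rho> * T) * (8 * \<rho> * T + 13) - 60 * exp (3 * \<rho> * T) - 3)
               / (16 * (2 * exp (3 * \<rho> * T) * (3 * \<rho> * T + 5) - 1)^2)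
             + (x^2 - y^2) / (2 * (\<rho> * T + 1))
             + (x - y)^2 / (16 * (\<rho> * T + 1)^2)"
proof -
  define r where "r = \<rho> * T"
  define c where "c = 1/2 + 2 * \<theta>"
  interpret grid_asymptotics_pos r c
    using assms by unfold_locales (simp_all add: r_def c_def)
  have forms: "exp (6 * \<rho> * T) = exp (3 * r)^2" "exp (3 * \<rho> * T) = exp (3 * r)"
    "8 * \<rho> * T = 8 * r" "3 * \<rho> * T = 3 * r" "\<rho> * T = r"
    by (simp_all add: r_def exp_6 mult.assoc)
  have "(\<lambda>N. moment_cost \<theta> x y (a N) c N) \<longlonglongrightarrow>
      (x + y)^2 * (36 * exp (3 * r)^2 * (8 * r + 13) - 60 * exp (3 * r) - 3)
        / (16 * (2 * exp (3 * r) * (3 * r + 5) - 1)^2)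
      + (x^2 - y^2) / (2 * (r + 1)) + (x - y)^2 / (16 * (r + 1)^2)"
    unfolding pos_theta_limit_eq[OF r_pos assms(3), symmetric] moment_cost_def c_def[symmetric]
    using nu_sum_limit_pos[OF r_pos, of 0] r_pos
    by (intro tendsto_intros nu_sum_tendsto nu_sq_sum_tendsto omega_sum_tendsto omega_sq_sum_tendsto
        nu_omega_sum_tendsto) auto
  then show ?thesis
    unfolding forms
    by (rule LIMSEQ_transform_pos[rotated]) (use assms in \<open>simp add: eq_cost_eq_moments r_def c_def\<close>)
qed

lemma eq_cost_parity_tendsto:
  fixes \<rho> T s0 x y :: real and p :: nat
  assumes "0 < \<rho>" "0 < T"
  defines "r \<equiv> \<rho> * T"
  shows "(\<lambda>N. eq_cost \<rho> T 0 s0 x y (2 * N + p)) \<longlonglongrightarrow>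
           ((x + y) / 2)^2 * (2 / (3 * nu_sum_limit r ((-1) ^ (p + 1) / exp (3 * r))))
         + ((x + y) / 2) * ((x - y) / 2) * (2 / (r + 1 - (-1) ^ (p + 1) * exp (- r)))"
proof -
  interpret grid_asymptotics r "1/2"
    using assms by unfold_locales simp_all
  interpret parity: grid_subsequence r "1/2" "\<lambda>N. 2 * N + p" "(-1) ^ (p + 1) / exp (3 * r)"
    "(-1) ^ (p + 1) * exp (- r)"
  proof unfold_locales
    show "strict_mono (\<lambda>N::nat. 2 * N + p)"
      by (rule strict_monoI) simp
  qed (rule R2_power_parity_tendsto q_power_parity_tendsto, simp)+
  have "0 < nu_sum_limit r ((-1) ^ (p + 1) / exp (3 * r))"
    by (rule nu_sum_limit_pos[OF r_pos parity.abs_l_le_1])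
  moreover have "r + 1 - (-1) ^ (p + 1) * exp (- r) \<noteq> 0"
  proof -
    have "(-1) ^ (p + 1) * exp (- r) \<le> exp (- r)"
      by (cases "even p") simp_all
    moreover have "exp (- r) < 1"
      using r_pos by simp
    ultimately show ?thesis
      using r_pos by linarith
  qed
  ultimately have "(\<lambda>N. moment_cost 0 x y (a (2 * N + p)) (1/2) (2 * N + p)) \<longlonglongrightarrow>
           ((x + y) / 2)^2 * (2 / (3 * nu_sum_limit r ((-1) ^ (p + 1) / exp (3 * r))))
         + ((x + y) / 2) * ((x - y) / 2) * (2 / (r + 1 - (-1) ^ (p + 1) * exp (- r)))"
    unfolding moment_cost_def using r_pos
    by (simp only: mult_zero_left mult_zero_right div_0 diff_zero add_0_right)
      (intro tendsto_intros parity.nu_sum_tendsto parity.omega_sum_tendsto; auto)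
  then show ?thesis
    by (rule LIMSEQ_transform_pos[rotated]) (use assms in \<open>simp add: eq_cost_eq_moments\<close>)
qed

lemma parity_limit_eq:
  fixes r s x y :: real
  assumes "0 < r" "\<bar>s\<bar> = 1"
  defines "E \<equiv> exp (3 * r)"
  assumes D: "D = 3 * r * (2 * E^2 - s) + 4 * (E + s) * (E - 1) + 3 * (2 * E + 1) * (E - s)"
    and R: "R = r + 1 - s * exp (- r)" and numerator: "M = 6 * E^2 - 3 * s"
  shows "((x + y) / 2)^2 * (2 / (3 * nu_sum_limit r (s / exp (3 * r))))
           + ((x + y) / 2) * ((x - y) / 2) * (2 / (r + 1 - s * exp (- r)))
         = (x + y)^2 * M / (2 * D) + (x^2 - y^2) / (2 * R)"
proof -
  have "1 < E"
    using assms(1) by (simp add: E_def)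
  then have "1 < E^2"
    by simp
  then have "0 < 2 * E^2 - s"
    using assms(2) by (simp add: abs_if split: if_splits)
  have limit: "nu_sum_limit r (s / exp (3 * r)) = D / (9 * (2 * E^2 - s))"
    using nu_sum_limit_parity[of r s] \<open>0 < 2 * E^2 - s\<close> unfolding D E_def by simp
  have "\<bar>s / exp (3 * r)\<bar> \<le> 1"
    using assms(1,2) by simp
  from nu_sum_limit_pos[OF assms(1) this] have "0 < D"
    unfolding limit using \<open>0 < 2 * E^2 - s\<close> by (simp add: zero_less_divide_iff)
  have "s * exp (- r) \<le> exp (- r)" "exp (- r) < 1"
    using assms by (auto simp: abs_if split: if_splits)
  then have "R \<noteq> 0"
    unfolding R using assms(1) by linarith
  have "((x + y) / 2)^2 * (2 / (3 * (D / (9 * (2 * E^2 - s))))) = (x + y)^2 * M / (2 * D)"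
    using \<open>0 < D\<close> \<open>0 < 2 * E^2 - s\<close> unfolding numerator by (simp add: field_simps power2_eq_square)
  moreover have "((x + y) / 2) * ((x - y) / 2) * (2 / R) = (x^2 - y^2) / (2 * R)"
    using \<open>R \<noteq> 0\<close> by (simp add: field_simps power2_eq_square)
  ultimately show ?thesis
    unfolding limit R[symmetric] by simp
qed

lemma eq_cost_even_tendsto:
  fixes \<rho> T s0 x y :: real
  assumes "0 < \<rho>" "0 < T"
  shows "(\<lambda>N. eq_cost \<rho> T 0 s0 x y (2 * N)) \<longlonglongrightarrow>
           (x + y)^2 * (6 * exp (6 * \<rho> * T) + 3)
             / (2 * (2 * exp (6 * \<rho> * T) * (3 * \<rho> * T + 5) + exp (3 * \<rho> * T) + 3 * \<rho> * T + 7))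
           + (x^2 - y^2) / (2 * (exp (- \<rho> * T) + \<rho> * T + 1))"
proof -
  define r where "r = \<rho> * T"
  define E where "E = exp (3 * r)"
  have "0 < r"
    using assms by (simp add: r_def)
  have forms: "exp (6 * \<rho> * T) = E^2" "exp (3 * \<rho> * T) = E" "exp (- \<rho> * T) = exp (- r)"
    "3 * \<rho> * T = 3 * r" "\<rho> * T = r"
    by (simp_all add: r_def E_def exp_6 mult.assoc)
  have closed: "((x + y) / 2)^2 * (2 / (3 * nu_sum_limit r ((-1) ^ (0 + 1) / exp (3 * r))))
      + ((x + y) / 2) * ((x - y) / 2) * (2 / (r + 1 - (-1) ^ (0 + 1) * exp (- r)))
      = (x + y)^2 * (6 * E^2 + 3) / (2 * (2 * E^2 * (3 * r + 5) + E + 3 * r + 7)) + (x^2 - y^2) / (2 * (exp (- r) + r + 1))"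
    by (rule parity_limit_eq[OF \<open>0 < r\<close>]) (simp_all add: E_def algebra_simps power2_eq_square)
  show ?thesis
    unfolding forms using eq_cost_parity_tendsto[OF assms, of s0 x y 0, folded r_def, unfolded closed]
    by (simp add: E_def[symmetric])
qed

lemma eq_cost_odd_tendsto:
  fixes \<rho> T s0 x y :: real
  assumes "0 < \<rho>" "0 < T"
  shows "(\<lambda>N. eq_cost \<rho> T 0 s0 x y (2 * N + 1)) \<longlonglongrightarrow>
           (x + y)^2 * (6 * exp (6 * \<rho> * T) - 3)
             / (2 * (2 * exp (6 * \<rho> * T) * (3 * \<rho> * T + 5) - 3 * exp (3 * \<rho> * T) - 3 * \<rho> * T - 7))
           + (x^2 - y^2) / (2 * (- exp (- \<rho> * T) + \<rho> * T + 1))"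
proof -
  define r where "r = \<rho> * T"
  define E where "E = exp (3 * r)"
  have "0 < r"
    using assms by (simp add: r_def)
  have forms: "exp (6 * \<rho> * T) = E^2" "exp (3 * \<rho> * T) = E" "exp (- \<rho> * T) = exp (- r)"
    "3 * \<rho> * T = 3 * r" "\<rho> * T = r"
    by (simp_all add: r_def E_def exp_6 mult.assoc)
  have closed: "((x + y) / 2)^2 * (2 / (3 * nu_sum_limit r ((-1) ^ (1 + 1) / exp (3 * r))))
      + ((x + y) / 2) * ((x - y) / 2) * (2 / (r + 1 - (-1) ^ (1 + 1) * exp (- r)))
      = (x + y)^2 * (6 * E^2 - 3) / (2 * (2 * E^2 * (3 * r + 5) - 3 * E - 3 * r - 7)) + (x^2 - y^2) / (2 * (- exp (- r) + r + 1))"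
    by (rule parity_limit_eq[OF \<open>0 < r\<close>]) (simp_all add: E_def algebra_simps power2_eq_square)
  show ?thesis
    unfolding forms using eq_cost_parity_tendsto[OF assms, of s0 x y 1, folded r_def, unfolded closed]
    by (simp add: E_def[symmetric])
qed

theorem theorem3p2:
  fixes \<rho> T \<theta> s0 x y :: real
  assumes "\<rho> > 0" and "T > 0" and "\<theta> \<ge> 0"
  shows "(\<theta> > 0 \<longrightarrow>
           (\<lambda>N. eq_cost \<rho> T \<theta> s0 x y N) \<longlonglongrightarrow>
             (x + y)^2 * (36 * exp (6 * \<rho> * T) * (8 * \<rho> * T + 13) - 60 * exp (3 * \<rho> * T) - 3)
               / (16 * (2 * exp (3 * \<rho> * T) * (3 * \<rho> * T + 5) - 1)^2)
             + (x^2 - y^2) / (2 * (\<rho> * T + 1))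
             + (x - y)^2 / (16 * (\<rho> * T + 1)^2))
    \<and> (\<theta> = 0 \<longrightarrow>
           (\<lambda>N. eq_cost \<rho> T \<theta> s0 x y (2 * N)) \<longlonglongrightarrow>
             (x + y)^2 * (6 * exp (6 * \<rho> * T) + 3)
               / (2 * (2 * exp (6 * \<rho> * T) * (3 * \<rho> * T + 5) + exp (3 * \<rho> * T) + 3 * \<rho> * T + 7))
             + (x^2 - y^2) / (2 * (exp (- \<rho> * T) + \<rho> * T + 1)))
    \<and> (\<theta> = 0 \<longrightarrow>
           (\<lambda>N. eq_cost \<rho> T \<theta> s0 x y (2 * N + 1)) \<longlonglongrightarrow>
             (x + y)^2 * (6 * exp (6 * \<rho> * T) - 3)
               / (2 * (2 * exp (6 * \<rho> * T) * (3 * \<rho> * T + 5) - 3 * exp (3 * \<rho> * T) - 3 * \<rho> * T - 7))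
             + (x^2 - y^2) / (2 * (- exp (- \<rho> * T) + \<rho> * T + 1)))"
  using eq_cost_tendsto_pos_theta[OF assms(1,2)] eq_cost_even_tendsto[OF assms(1,2)]
    eq_cost_odd_tendsto[OF assms(1,2)] by blast

end
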